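(* Let $M\subset A^r$ be a finitely generated graded right $A$-submodule with minimal homogeneous basis $g_1,\dots,g_s$ of degrees $\Delta_j=\deg g_j\le d$ for a fixed integer $d$, let $K$ be the right syzygy module of $\{g_j\}$ (kernel of $\bigoplus_jA[-\Delta_j]\to A^r$, $\epsilon_j\mapsto g_j$), $g'_j=\iota(g_j)\in S(d)^r$, and let $K'_{|d}=\{\sum_j\epsilon'_jf'_j\mid f'_j\in S(d),\ \sum_jg'_jf'_j=0\}\subset\bigoplus_jS(d)[-\Delta_j]$. Let $B=\{\epsilon'_jx_{kl}\mid 1\le j\le s,1\le k\le n,1\le l\le\Delta_j\}$. If $B\cup\{h'_k\}$ is a minimal homogeneous basis of the $S(d)$-module $K'_{|d}$ with each $h'_k$ in the image of the module letterplace embedding $\iota$, and $h_k=\iota^{-1}(h'_k)$, then $\{h_k\}$ is a minimal homogeneous basis of $K$ in all degrees $\le d$, i.e. the $h_k$ form exactly the elements of degree $\le d$ of some minimal homogeneous basis of $K$.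
   Context: Let $\mathbb K$ be a field, $F=\mathbb K\langle x_1,\dots,x_n\rangle$ with standard grading, $I\subset F$ a graded two-sided ideal, $A=F/I$, $A[-\delta]_d=A_{d-\delta}$; $A^r$ has basis $e_i$ (degree 0), $\bigoplus_jA[-\Delta_j]$ has basis $\epsilon_j$ (degree $\Delta_j$). Let $P=\mathbb K[x_{ij}\mid1\le i\le n,j\ge1]$ (commutative, $\deg x_{ij}=1$), $Q$ the ideal generated by all $x_{ij}x_{kj}$, $R=P/Q$, $\sigma:x_{ij}\mapsto x_{i,j+1}$, $\iota:F\to R$ the $\mathbb K$-linear map $x_{i_1}\cdots x_{i_e}\mapsto x_{i_11}\cdots x_{i_ee}$, $J$ the ideal of $R$ generated by $\bigcup_{k\ge0}\sigma^k(\iota(I))$, $S=R/J$ (with induced $\sigma$ and induced injective linear $\iota:A\to S$). $S(d)$ is the subalgebra of $S$ generated by cosets of $x_{ij}$ with $j\le d$ (a quotient of the finitely generated polynomial ring $\mathbb K[x_{ij}\mid j\le d]$). $\bigoplus_jS(d)[-\Delta_j]$ is the free $S(d)$-module with basis $\epsilon'_j$ of degree $\Delta_j$. The module letterplace embedding of $\bigoplus_iA[-\delta_i]$ into $\bigoplus_iS[-\delta_i]$ (bases $e_i$, $e'_i$) is the $\mathbb K$-linear map $e_if\mapsto e'_i\sigma^{\delta_i}(\iota(f))$. Minimal basis: homogeneous generating set with no element in the submodule generated by the others. *)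

theory Defs
  imports "HOL-Library.Poly_Mapping"
begin

text \<open>Noncommutative polynomials: finitely supported maps from words (lists of
variable indices, variable x_i encoded as the letter i, 1 <= i <= n) to K.\<close>
type_synonym 'k fpoly = "nat list \<Rightarrow>\<^sub>0 'k"

definition fmul :: "('k::ring) fpoly \<Rightarrow> 'k fpoly \<Rightarrow> 'k fpoly" where
  "fmul p q = (\<Sum>u\<in>Poly_Mapping.keys p. \<Sum>v\<in>Poly_Mapping.keys q. Poly_Mapping.single (u @ v) (Poly_Mapping.lookup p u * Poly_Mapping.lookup q v))"

definition Fcar :: "nat \<Rightarrow> 'k::zero fpoly set" where
  "Fcar n = {p. \<forall>w\<in>Poly_Mapping.keys p. set w \<subseteq> {1..n}}"

definition fhom :: "nat \<Rightarrow> 'k::zero fpoly \<Rightarrow> bool" where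
  "fhom e p \<longleftrightarrow> (\<forall>w\<in>Poly_Mapping.keys p. length w = e)"

definition fcomp :: "nat \<Rightarrow> 'k::comm_monoid_add fpoly \<Rightarrow> 'k fpoly" where
  "fcomp e p = (\<Sum>w\<in>{w\<in>Poly_Mapping.keys p. length w = e}. Poly_Mapping.single w (Poly_Mapping.lookup p w))"

definition graded_ideal :: "nat \<Rightarrow> ('k::ring) fpoly set \<Rightarrow> bool" where
  "graded_ideal n I \<longleftrightarrow> I \<subseteq> Fcar n \<and> 0 \<in> I \<and>
     (\<forall>p\<in>I. \<forall>q\<in>I. p + q \<in> I) \<and>
     (\<forall>p\<in>I. \<forall>a\<in>Fcar n. fmul a p \<in> I \<and> fmul p a \<in> I) \<and>
     (\<forall>p\<in>I. \<forall>e. fcomp e p \<in> I)"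

text \<open>Elements of A, A^r and of the free module (+)_j A[-Delta_j] are represented
by representatives in F; two representatives are equal in A iff their difference
lies in I.  Vectors are functions on indices, only indices 1..m are relevant.\<close>
definition vequivA :: "'k::ab_group_add fpoly set \<Rightarrow> nat \<Rightarrow> (nat \<Rightarrow> 'k fpoly) \<Rightarrow> (nat \<Rightarrow> 'k fpoly) \<Rightarrow> bool" where
  "vequivA I m v w \<longleftrightarrow> (\<forall>i\<in>{1..m}. v i - w i \<in> I)"

definition rspanA :: "nat \<Rightarrow> ('k::ring) fpoly set \<Rightarrow> nat \<Rightarrow> (nat \<Rightarrow> 'k fpoly) set \<Rightarrow> (nat \<Rightarrow> 'k fpoly) \<Rightarrow> bool" where
  "rspanA n I m G v \<longleftrightarrow> (\<exists>gs as. length as = length gs \<and> set gs \<subseteq> G \<and> set as \<subseteq> Fcar n \<and>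
      vequivA I m v (\<lambda>i. \<Sum>t<length gs. fmul ((gs ! t) i) (as ! t)))"

text \<open>Homogeneous element of degree e of (+)_{j=1..s} A[-Delta_j]
(basis eps_j of degree Delta_j), up to equality in A.\<close>
definition homA :: "'k::ab_group_add fpoly set \<Rightarrow> nat \<Rightarrow> (nat \<Rightarrow> nat) \<Rightarrow> nat \<Rightarrow> (nat \<Rightarrow> 'k fpoly) \<Rightarrow> bool" where
  "homA I s \<Delta> e v \<longleftrightarrow> (\<exists>w. vequivA I s v w \<and>
     (\<forall>j\<in>{1..s}. if \<Delta> j \<le> e then fhom (e - \<Delta> j) (w j) else w j = 0))"

text \<open>The right syzygy module K of g_1..g_s in A^r (g j i = i-th component of g_j).\<close>
definition syzA :: "nat \<Rightarrow> ('k::ring) fpoly set \<Rightarrow> nat \<Rightarrow> nat \<Rightarrow> (nat \<Rightarrow> nat \<Rightarrow> 'k fpoly) \<Rightarrow> (nat \<Rightarrow> 'k fpoly) \<Rightarrow> bool" where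
  "syzA n I r s g v \<longleftrightarrow> (\<forall>j\<in>{1..s}. v j \<in> Fcar n) \<and>
     (\<forall>i\<in>{1..r}. (\<Sum>j=1..s. fmul (g j i) (v j)) \<in> I)"

definition minbasis_syzA :: "nat \<Rightarrow> ('k::ring) fpoly set \<Rightarrow> nat \<Rightarrow> nat \<Rightarrow> (nat \<Rightarrow> nat)
     \<Rightarrow> (nat \<Rightarrow> nat \<Rightarrow> 'k fpoly) \<Rightarrow> (nat \<Rightarrow> 'k fpoly) set \<Rightarrow> bool" where
  "minbasis_syzA n I r s \<Delta> g H \<longleftrightarrow>
     (\<forall>h\<in>H. syzA n I r s g h) \<and>
     (\<forall>h\<in>H. \<exists>e. homA I s \<Delta> e h) \<and>
     (\<forall>v. syzA n I r s g v \<longrightarrow> rspanA n I s H v) \<and>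
     (\<forall>h\<in>H. \<not> rspanA n I s {w\<in>H. \<not> vequivA I s w h} h)"

type_synonym 'k cpoly = "((nat \<times> nat) \<Rightarrow>\<^sub>0 nat) \<Rightarrow>\<^sub>0 'k"

definition X :: "nat \<Rightarrow> nat \<Rightarrow> 'k::{zero,one} cpoly" where
  "X i j = Poly_Mapping.single (Poly_Mapping.single (i, j) 1) 1"

definition cconst :: "'k::zero \<Rightarrow> 'k cpoly" where
  "cconst c = Poly_Mapping.single 0 c"

definition Pcar :: "nat \<Rightarrow> 'k::zero cpoly set" where
  "Pcar n = {p. \<forall>m\<in>Poly_Mapping.keys p. \<forall>(i,j)\<in>Poly_Mapping.keys m. 1 \<le> i \<and> i \<le> n \<and> 1 \<le> j}"

definition Pdcar :: "nat \<Rightarrow> nat \<Rightarrow> 'k::zero cpoly set" where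
  "Pdcar n d = {p. \<forall>m\<in>Poly_Mapping.keys p. \<forall>(i,j)\<in>Poly_Mapping.keys m. 1 \<le> i \<and> i \<le> n \<and> 1 \<le> j \<and> j \<le> d}"

definition cdeg :: "((nat \<times> nat) \<Rightarrow>\<^sub>0 nat) \<Rightarrow> nat" where
  "cdeg m = (\<Sum>x\<in>Poly_Mapping.keys m. Poly_Mapping.lookup m x)"

definition phom :: "nat \<Rightarrow> 'k::zero cpoly \<Rightarrow> bool" where
  "phom e p \<longleftrightarrow> (\<forall>m\<in>Poly_Mapping.keys p. cdeg m = e)"

text \<open>sigma^k(iota(w)) for a word w: x_{w_1,1+k} ... x_{w_e,e+k}.\<close>
definition lpw :: "nat \<Rightarrow> nat list \<Rightarrow> 'k::comm_ring_1 cpoly" where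
  "lpw k w = (\<Prod>t<length w. X (w ! t) (t + 1 + k))"

text \<open>sigma^k o iota, the K-linear extension to F.\<close>
definition iota_sh :: "nat \<Rightarrow> 'k::comm_ring_1 fpoly \<Rightarrow> 'k cpoly" where
  "iota_sh k p = (\<Sum>w\<in>Poly_Mapping.keys p. cconst (Poly_Mapping.lookup p w) * lpw k w)"

text \<open>Generators of Q + J' in P, where J' is generated by the sigma^k(iota(I)).
S = R/J = P/(ideal generated by these).\<close>
definition LPgens :: "nat \<Rightarrow> 'k::comm_ring_1 fpoly set \<Rightarrow> 'k cpoly set" where
  "LPgens n I = {X i j * X k j | i k j. 1 \<le> i \<and> i \<le> n \<and> 1 \<le> k \<and> k \<le> n \<and> 1 \<le> j}
              \<union> {iota_sh k p | k p. p \<in> I}"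

definition LPideal :: "nat \<Rightarrow> 'k::comm_ring_1 fpoly set \<Rightarrow> 'k cpoly set" where
  "LPideal n I = {\<Sum>t<length as. as ! t * gs ! t | as gs.
       length as = length gs \<and> set as \<subseteq> Pcar n \<and> set gs \<subseteq> LPgens n I}"

definition vequivS :: "nat \<Rightarrow> 'k::comm_ring_1 fpoly set \<Rightarrow> nat \<Rightarrow> (nat \<Rightarrow> 'k cpoly) \<Rightarrow> (nat \<Rightarrow> 'k cpoly) \<Rightarrow> bool" where
  "vequivS n I m v w \<longleftrightarrow> (\<forall>i\<in>{1..m}. v i - w i \<in> LPideal n I)"

definition spanSd :: "nat \<Rightarrow> 'k::comm_ring_1 fpoly set \<Rightarrow> nat \<Rightarrow> nat \<Rightarrow> (nat \<Rightarrow> 'k cpoly) set \<Rightarrow> (nat \<Rightarrow> 'k cpoly) \<Rightarrow> bool" where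
  "spanSd n I d m G v \<longleftrightarrow> (\<exists>gs as. length as = length gs \<and> set gs \<subseteq> G \<and> set as \<subseteq> Pdcar n d \<and>
      vequivS n I m v (\<lambda>i. \<Sum>t<length gs. ((gs ! t) i) * (as ! t)))"

definition homS :: "nat \<Rightarrow> 'k::comm_ring_1 fpoly set \<Rightarrow> nat \<Rightarrow> (nat \<Rightarrow> nat) \<Rightarrow> nat \<Rightarrow> (nat \<Rightarrow> 'k cpoly) \<Rightarrow> bool" where
  "homS n I s \<Delta> e v \<longleftrightarrow> (\<exists>w. vequivS n I s v w \<and>
     (\<forall>j\<in>{1..s}. if \<Delta> j \<le> e then phom (e - \<Delta> j) (w j) else w j = 0))"

text \<open>K'_{|d}: elements sum_j eps'_j f'_j with f'_j in S(d) and sum_j g'_j f'_j = 0,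
where g'_j = iota(g_j).\<close>
definition syzSd :: "nat \<Rightarrow> 'k::comm_ring_1 fpoly set \<Rightarrow> nat \<Rightarrow> nat \<Rightarrow> nat \<Rightarrow> (nat \<Rightarrow> nat \<Rightarrow> 'k fpoly)
     \<Rightarrow> (nat \<Rightarrow> 'k cpoly) \<Rightarrow> bool" where
  "syzSd n I d r s g v \<longleftrightarrow> (\<exists>w. vequivS n I s v w \<and> (\<forall>j\<in>{1..s}. w j \<in> Pdcar n d) \<and>
     (\<forall>i\<in>{1..r}. (\<Sum>j=1..s. iota_sh 0 (g j i) * w j) \<in> LPideal n I))"

definition minbasis_syzSd :: "nat \<Rightarrow> 'k::comm_ring_1 fpoly set \<Rightarrow> nat \<Rightarrow> nat \<Rightarrow> nat \<Rightarrow> (nat \<Rightarrow> nat)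
     \<Rightarrow> (nat \<Rightarrow> nat \<Rightarrow> 'k fpoly) \<Rightarrow> (nat \<Rightarrow> 'k cpoly) set \<Rightarrow> bool" where
  "minbasis_syzSd n I d r s \<Delta> g H \<longleftrightarrow>
     (\<forall>h\<in>H. syzSd n I d r s g h) \<and>
     (\<forall>h\<in>H. \<exists>e. homS n I s \<Delta> e h) \<and>
     (\<forall>v. syzSd n I d r s g v \<longrightarrow> spanSd n I d s H v) \<and>
     (\<forall>h\<in>H. \<not> spanSd n I d s {w\<in>H. \<not> vequivS n I s w h} h)"

definition Bset :: "nat \<Rightarrow> nat \<Rightarrow> (nat \<Rightarrow> nat) \<Rightarrow> (nat \<Rightarrow> 'k::comm_ring_1 cpoly) set" where
  "Bset n s \<Delta> = {(\<lambda>j'. if j' = j then X k l else 0) | j k l.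
        1 \<le> j \<and> j \<le> s \<and> 1 \<le> k \<and> k \<le> n \<and> 1 \<le> l \<and> l \<le> \<Delta> j}"

end

theory Submission
  imports Defs
begin

text \<open>The letterplace map places a word \<open>x_{i_1} \<cdots> x_{i_e}\<close> at the positions \<open>k+1, \<dots>, k+e\<close>,
  i.e. \<open>\<sigma>^k(\<iota>(x_{i_1} \<cdots> x_{i_e})) = x_{i_1,k+1} \<cdots> x_{i_e,k+e}\<close>. Reading off the monomials
  occupying these positions (the map \<open>phi\<close>) is a left inverse of \<open>\<sigma>^k \<circ> \<iota>\<close> which maps
  the letterplace ideal \<open>Q + J\<close> into \<open>I\<close>.

  A syzygy of the \<open>g_j\<close> that is homogeneous of degree \<open>e \<le> d\<close> therefore lifts to an element of
  \<open>K'_{|d}\<close>. Writing it in the basis \<open>B \<union> {h'_k}\<close> and reading off the degree-\<open>e\<close> part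
  returns an expression in the \<open>h_k\<close>: an element \<open>\<epsilon>'_j x_{kl}\<close> of \<open>B\<close> occupies a position
  \<open>l \<le> \<Delta>_j\<close> in front of the window that is read off, so it contributes nothing. Conversely, a
  relation among the \<open>h_k\<close> lifts to one among the \<open>h'_k\<close>, which the minimality of the basis of
  \<open>K'_{|d}\<close> forbids. Since \<open>K\<close> is
  graded, adding in every higher degree a maximal set of syzygies that are independent modulo
  those of lower degree (Zorn's lemma) completes them to a minimal homogeneous basis of \<open>K\<close>.\<close>

abbreviation lookup :: "('a \<Rightarrow>\<^sub>0 'b::zero) \<Rightarrow> 'a \<Rightarrow> 'b" where "lookup \<equiv> Poly_Mapping.lookup"
abbreviation keys :: "('a \<Rightarrow>\<^sub>0 'b::zero) \<Rightarrow> 'a set" where "keys \<equiv> Poly_Mapping.keys"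
abbreviation single :: "'a \<Rightarrow> 'b::zero \<Rightarrow> 'a \<Rightarrow>\<^sub>0 'b" where "single \<equiv> Poly_Mapping.single"

text \<open>Words form a monoid under concatenation, which turns \<open>nat list \<Rightarrow>\<^sub>0 'k\<close> into the monoid
  algebra; its multiplication is \<open>fmul\<close> (see \<open>fmul_eq_times\<close>).\<close>

instantiation list :: (type) monoid_add
begin
definition zero_list_def: "0 = []"
definition plus_list_def: "xs + ys = xs @ ys"
instance by standard (auto simp: zero_list_def plus_list_def)
end

section \<open>Homogeneous components of noncommutative polynomials\<close>

lemma poly_mapping_sum_single: "p = (\<Sum>k\<in>keys p. single k (lookup p k))"
  by (rule poly_mapping_eqI) (auto simp add: lookup_sum lookup_single when_def in_keys_iff)

lemma poly_mapping_induct_keys: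
  fixes p :: "'a \<Rightarrow>\<^sub>0 'b::comm_monoid_add"
  assumes "P 0" "\<And>k c. k \<in> keys p \<Longrightarrow> P (single k c)" "\<And>a b. P a \<Longrightarrow> P b \<Longrightarrow> P (a + b)"
  shows "P p"
proof -
  have "finite A \<Longrightarrow> A \<subseteq> keys p \<Longrightarrow> P (\<Sum>k\<in>A. single k (lookup p k))" for A
    by (induction rule: finite_induct) (auto intro: assms)
  from this[of "keys p"] show ?thesis by (simp flip: poly_mapping_sum_single)
qed

lemma poly_mapping_induct:
  fixes p :: "'a \<Rightarrow>\<^sub>0 'b::comm_monoid_add"
  assumes "P 0" "\<And>k c. P (single k c)" "\<And>a b. P a \<Longrightarrow> P b \<Longrightarrow> P (a + b)"
  shows "P p"
  using poly_mapping_induct_keys[of P p] assms by blast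

lemma fmul_eq_times: "fmul p q = p * q"
proof -
  have "p * q = (\<Sum>u\<in>keys p. single u (lookup p u)) * (\<Sum>v\<in>keys q. single v (lookup q v))"
    by (simp flip: poly_mapping_sum_single)
  also have "\<dots> = (\<Sum>u\<in>keys p. \<Sum>v\<in>keys q. single u (lookup p u) * single v (lookup q v))"
    by (subst sum_distrib_right) (simp only: sum_distrib_left)
  also have "\<dots> = fmul p q"
    by (simp add: fmul_def mult_single plus_list_def)
  finally show ?thesis by simp
qed

lemma single_times_single: "single u a * single v b = single (u @ v) (a * b)"
  by (simp add: mult_single plus_list_def)

lemma lookup_fcomp: "lookup (fcomp e p) u = (if length u = e then lookup p u else 0)"
  unfolding fcomp_def
  by (auto simp add: lookup_sum lookup_single when_def in_keys_iff)

lemma fcomp_add: "fcomp e (p + q) = fcomp e p + fcomp e q"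
  by (rule poly_mapping_eqI) (simp add: lookup_fcomp lookup_add)
lemma fcomp_diff: "fcomp e (p - q) = fcomp e p - fcomp e q"
  by (rule poly_mapping_eqI) (simp add: lookup_fcomp lookup_minus)
lemma fcomp_zero[simp]: "fcomp e 0 = 0"
  by (rule poly_mapping_eqI) (simp add: lookup_fcomp)
lemma fcomp_sum: "fcomp e (sum f A) = (\<Sum>x\<in>A. fcomp e (f x))"
  by (rule poly_mapping_eqI) (simp add: lookup_fcomp lookup_sum)
lemma fcomp_fcomp: "fcomp e (fcomp e' p) = (if e = e' then fcomp e p else 0)"
  by (rule poly_mapping_eqI) (simp add: lookup_fcomp)
lemma fcomp_single: "fcomp e (single w c) = (if length w = e then single w c else 0)"
  by (rule poly_mapping_eqI) (simp add: lookup_fcomp lookup_single when_def)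

lemma fhom_iff: "fhom e p \<longleftrightarrow> fcomp e p = p"
  unfolding fhom_def poly_mapping_eq_iff
  by (auto simp: fun_eq_iff lookup_fcomp in_keys_iff)

lemma fhom_fcomp: "fhom e (fcomp e p)"
  by (simp add: fhom_iff fcomp_fcomp)

lemma sum_fcomp_eq:
  assumes "\<forall>w\<in>keys p. length w < N"
  shows "(\<Sum>e<N. fcomp e p) = p"
proof (rule poly_mapping_eqI)
  fix u
  show "lookup (\<Sum>e<N. fcomp e p) u = lookup p u"
  proof (cases "length u < N")
    case True
    then show ?thesis by (simp add: lookup_sum lookup_fcomp)
  next
    case False
    then have "lookup p u = 0" using assms by (auto simp: in_keys_iff)
    then show ?thesis by (simp add: lookup_sum lookup_fcomp)
  qed
qed

lemma ex_sum_fcomp_eq: "\<exists>N. \<forall>M\<ge>N. (\<Sum>e<M. fcomp e p) = p"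
proof -
  obtain N where "\<forall>w\<in>keys p. length w < N"
    using finite_keys[of p] by (metis finite_maxlen)
  then show ?thesis by (metis sum_fcomp_eq order_less_le_trans)
qed

lemma fcomp_fhom_times:
  assumes "fhom a p"
  shows "fcomp (a + b) (p * c) = p * fcomp b c"
proof -
  have H: "\<forall>w\<in>keys p. length w = a" using assms by (simp add: fhom_def)
  show ?thesis
  proof (rule poly_mapping_induct_keys[of "\<lambda>q. fcomp (a + b) (q * c) = q * fcomp b c" p])
    fix k x assume k: "k \<in> keys p"
    show "fcomp (a + b) (single k x * c) = single k x * fcomp b c"
      by (induction c rule: poly_mapping_induct)
        (use H k in \<open>auto simp: single_times_single fcomp_single fcomp_add distrib_left\<close>)
  qed (auto simp: distrib_right fcomp_add)
qed

lemma fcomp_fhom_times_below: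
  assumes "fhom a p" "e < a"
  shows "fcomp e (p * c) = 0"
proof -
  have H: "\<forall>w\<in>keys p. length w = a" using assms by (simp add: fhom_def)
  show ?thesis
  proof (rule poly_mapping_induct_keys[of "\<lambda>q. fcomp e (q * c) = 0" p])
    fix k x assume k: "k \<in> keys p"
    show "fcomp e (single k x * c) = 0"
      by (induction c rule: poly_mapping_induct)
        (use H k assms(2) in \<open>auto simp: single_times_single fcomp_single fcomp_add distrib_left\<close>)
  qed (auto simp: distrib_right fcomp_add)
qed

lemma Fcar_iff: "p \<in> Fcar n \<longleftrightarrow> (\<forall>w\<in>keys p. set w \<subseteq> {1..n})"
  by (simp add: Fcar_def)

lemma Fcar_zero[simp]: "0 \<in> Fcar n"
  by (simp add: Fcar_def)

lemma Fcar_mult: "p \<in> Fcar n \<Longrightarrow> q \<in> Fcar n \<Longrightarrow> (p::'k::ring fpoly) * q \<in> Fcar n"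
  using keys_mult[of p q] by (fastforce simp: Fcar_def plus_list_def)

lemma Fcar_fcomp: "p \<in> Fcar n \<Longrightarrow> fcomp e p \<in> Fcar n"
  by (auto simp: Fcar_def in_keys_iff lookup_fcomp split: if_splits)

lemma Fcar_single: "set w \<subseteq> {1..n} \<Longrightarrow> single w c \<in> Fcar n"
  by (simp add: Fcar_def)

lemma uminus_eq_single_Nil_times: "- (p::'k::ring_1 fpoly) = single [] (-1) * p"
  by (induction p rule: poly_mapping_induct) (auto simp: single_times_single distrib_left single_uminus)

locale graded_quotient =
  fixes n :: nat and I :: "'k::field fpoly set"
  assumes I: "graded_ideal n I"
begin

lemma ideal_zero[simp]: "0 \<in> I"
  using I by (auto simp: graded_ideal_def)
lemma ideal_add: "p \<in> I \<Longrightarrow> q \<in> I \<Longrightarrow> p + q \<in> I"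
  using I by (auto simp: graded_ideal_def)
lemma ideal_lmult: "a \<in> Fcar n \<Longrightarrow> p \<in> I \<Longrightarrow> a * p \<in> I"
  using I by (auto simp: graded_ideal_def fmul_eq_times)
lemma ideal_rmult: "a \<in> Fcar n \<Longrightarrow> p \<in> I \<Longrightarrow> p * a \<in> I"
  using I by (auto simp: graded_ideal_def fmul_eq_times)
lemma ideal_fcomp: "p \<in> I \<Longrightarrow> fcomp e p \<in> I"
  using I by (auto simp: graded_ideal_def)
lemma ideal_uminus: "p \<in> I \<Longrightarrow> - p \<in> I"
  by (simp add: uminus_eq_single_Nil_times ideal_lmult Fcar_single)
lemma ideal_diff: "p \<in> I \<Longrightarrow> q \<in> I \<Longrightarrow> p - q \<in> I"
  using ideal_add[of p "-q"] ideal_uminus[of q] by simp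
lemma ideal_sum: "(\<And>x. x \<in> A \<Longrightarrow> f x \<in> I) \<Longrightarrow> sum f A \<in> I"
  by (induction A rule: infinite_finite_induct) (auto intro: ideal_add)
lemma ideal_diff_trans: "p - q \<in> I \<Longrightarrow> q - r \<in> I \<Longrightarrow> p - r \<in> I"
  using ideal_add[of "p - q" "q - r"] by simp
lemma ideal_diff_sym: "p - q \<in> I \<Longrightarrow> q - p \<in> I"
  using ideal_uminus[of "p - q"] by simp
end

section \<open>Letterplace monomials and the embedding \<open>\<iota>\<close>\<close>

definition lpmon :: "nat \<Rightarrow> nat list \<Rightarrow> (nat \<times> nat) \<Rightarrow>\<^sub>0 nat" where
  "lpmon k w = (\<Sum>t<length w. single (w ! t, t + 1 + k) 1)"

lemma lookup_lpmon:
  "lookup (lpmon k w) (a, c) = (if k < c \<and> c \<le> k + length w \<and> w ! (c - k - 1) = a then 1 else 0)"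
proof -
  have "lookup (lpmon k w) (a, c) = (\<Sum>t\<in>{..<length w}. if t = c - k - 1 then (if k < c \<and> w ! (c - k - 1) = a then 1 else 0) else 0)"
    unfolding lpmon_def lookup_sum
  proof (rule sum.cong)
    fix t assume "t \<in> {..<length w}"
    have e: "t + 1 + k = c \<longleftrightarrow> (t = c - k - 1 \<and> k < c)" by linarith
    show "lookup (single (w ! t, t + 1 + k) 1) (a, c) = (if t = c - k - 1 then (if k < c \<and> w ! (c - k - 1) = a then 1 else 0) else 0)"
      unfolding lookup_single when_def by (cases "t = c - k - 1") (auto simp: e)
  qed simp
  also have "\<dots> = (if c - k - 1 < length w then (if k < c \<and> w ! (c - k - 1) = a then 1 else 0) else 0)"
    by (simp only: sum.delta[OF finite_lessThan] lessThan_iff)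
  also have "\<dots> = (if k < c \<and> c \<le> k + length w \<and> w ! (c - k - 1) = a then 1 else 0)"
  proof (cases "k < c")
    case True
    then have "c - k - 1 < length w \<longleftrightarrow> c \<le> k + length w" by linarith
    then show ?thesis using True by simp
  qed simp
  finally show ?thesis .
qed

lemma lookup_lpmon_pair: "lookup (lpmon k w) x = (if k < snd x \<and> snd x \<le> k + length w \<and> w ! (snd x - k - 1) = fst x then 1 else 0)"
  by (cases x) (simp only: lookup_lpmon fst_conv snd_conv)

lemma lpmon_nil[simp]: "lpmon k [] = 0"
  by (simp add: lpmon_def)

lemma lpmon_append: "lpmon k (u @ v) = lpmon k u + lpmon (k + length u) v"
proof (rule poly_mapping_eqI)
  fix x :: "nat \<times> nat"
  obtain a c where x: "x = (a, c)" by force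
  show "lookup (lpmon k (u @ v)) x = lookup (lpmon k u + lpmon (k + length u) v) x"
  proof (cases "c \<le> k + length u")
    case True
    have 1: "lookup (lpmon (k + length u) v) (a, c) = 0" using True by (simp add: lookup_lpmon)
    have 2: "lookup (lpmon k (u @ v)) (a, c) = lookup (lpmon k u) (a, c)"
    proof (cases "k < c")
      case True
      with \<open>c \<le> k + length u\<close> have "c - k - 1 < length u" by linarith
      then have "(u @ v) ! (c - k - 1) = u ! (c - k - 1)" by (simp add: nth_append)
      then show ?thesis using True \<open>c \<le> k + length u\<close> by (simp add: lookup_lpmon)
    next
      case False
      then show ?thesis by (simp add: lookup_lpmon)
    qed
    show ?thesis unfolding x lookup_add 1 2 by simp
  next
    case False
    have 1: "lookup (lpmon k u) (a, c) = 0" using False by (simp add: lookup_lpmon)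
    have e: "c - k - 1 - length u = c - (k + length u) - 1" by linarith
    have "\<not> c - k - 1 < length u" using False by linarith
    then have 3: "(u @ v) ! (c - k - 1) = v ! (c - (k + length u) - 1)" by (simp add: nth_append e)
    have 2: "lookup (lpmon k (u @ v)) (a, c) = lookup (lpmon (k + length u) v) (a, c)"
      unfolding lookup_lpmon 3 using False by simp
    show ?thesis unfolding x lookup_add 1 2 by simp
  qed
qed

lemma lpmon_single: "lpmon k [a] = single (a, k + 1) 1"
  by (simp add: lpmon_def)

lemma lpmon_inj: assumes "lpmon k u = lpmon k v" shows "u = v"
proof -
  have L: "lookup (lpmon k u) x = lookup (lpmon k v) x" for x using assms by simp
  have len: "length u = length v"
  proof (rule ccontr)
    assume "length u \<noteq> length v"
    then consider "length u < length v" | "length v < length u" by linarith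
    then show False
    proof cases
      case 1
      then have "v \<noteq> []" by auto
      then show False using 1 L[of "(v ! (length v - 1), k + length v)"]
        by (simp add: lookup_lpmon)
    next
      case 2
      then have "u \<noteq> []" by auto
      then show False using 2 L[of "(u ! (length u - 1), k + length u)"]
        by (simp add: lookup_lpmon)
    qed
  qed
  show ?thesis
  proof (rule nth_equalityI[OF len])
    fix t assume "t < length u"
    then show "u ! t = v ! t" using L[of "(u ! t, k + t + 1)"] len
      by (simp add: lookup_lpmon split: if_splits)
  qed
qed

lemma lpmon_eq_iff: "lpmon k u = lpmon k v \<longleftrightarrow> u = v"
  using lpmon_inj by blast

lemma cdeg_add: "cdeg (m + m') = cdeg m + cdeg m'"
  unfolding cdeg_def by (rule setsum_keys_plus_distrib) auto

lemma cdeg_single: "cdeg (single x 1) = 1" "cdeg (single x (Suc 0)) = 1"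
  by (simp_all add: cdeg_def)

lemma cdeg_zero[simp]: "cdeg 0 = 0"
  by (simp add: cdeg_def)

lemma cdeg_lpmon: "cdeg (lpmon k u) = length u"
  by (induction u rule: rev_induct) (simp_all add: lpmon_append lpmon_single cdeg_add cdeg_single)

lemma prod_single_one: "(\<Prod>t\<in>A. single (f t) (1::'k::comm_ring_1)) = single (\<Sum>t\<in>A. f t) 1"
  by (induction A rule: infinite_finite_induct) (auto simp: mult_single)

lemma lpw_eq_single: "lpw k w = (single (lpmon k w) 1 :: 'k::comm_ring_1 cpoly)"
  unfolding lpw_def X_def lpmon_def by (simp add: prod_single_one)

lemma cconst_mult: "cconst c * single m 1 = (single m c :: 'k::comm_ring_1 cpoly)"
  by (simp add: cconst_def mult_single)

lemma iota_sh_eq_sum: "iota_sh k p = (\<Sum>w\<in>keys p. single (lpmon k w) (lookup p w))"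
  unfolding iota_sh_def by (simp add: lpw_eq_single cconst_mult)

lemma iota_sh_single: "iota_sh k (single w c) = single (lpmon k w) c"
  by (simp add: iota_sh_eq_sum)

lemma iota_sh_add: "iota_sh k (p + q) = iota_sh k p + iota_sh k q"
  unfolding iota_sh_eq_sum by (rule setsum_keys_plus_distrib) (auto simp: single_add)

lemma iota_sh_zero[simp]: "iota_sh k 0 = 0"
  by (simp add: iota_sh_eq_sum)

lemma iota_sh_uminus: "iota_sh k (- p) = - iota_sh k p"
  unfolding iota_sh_eq_sum by (simp add: single_uminus sum_negf)

lemma iota_sh_diff: "iota_sh k (p - q) = iota_sh k p - iota_sh k q"
  using iota_sh_add[of k p "-q"] iota_sh_uminus[of k q] by simp

lemma iota_sh_sum: "iota_sh k (sum f A) = (\<Sum>x\<in>A. iota_sh k (f x))"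
  by (induction A rule: infinite_finite_induct) (auto simp: iota_sh_add)

lemma iota_sh_fhom_times:
  assumes "fhom a f"
  shows "iota_sh k (f * q) = iota_sh k f * iota_sh (k + a) (q :: 'k::comm_ring_1 fpoly)"
proof -
  have H: "\<forall>w\<in>keys f. length w = a" using assms by (simp add: fhom_def)
  show ?thesis
  proof (rule poly_mapping_induct_keys[of "\<lambda>f. iota_sh k (f * q) = iota_sh k f * iota_sh (k + a) q" f])
    fix w x assume w: "w \<in> keys f"
    then have lw: "length w = a" using H by auto
    show "iota_sh k (single w x * q) = iota_sh k (single w x) * iota_sh (k + a) q"
    proof (induction q rule: poly_mapping_induct)
      case (2 v y)
      have "iota_sh k (single w x * single v y) = single (lpmon k w + lpmon (k + a) v) (x * y)"
        by (simp add: single_times_single iota_sh_single lpmon_append lw)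
      also have "\<dots> = iota_sh k (single w x) * iota_sh (k + a) (single v y)"
        by (simp add: iota_sh_single mult_single)
      finally show ?case .
    next
      case (3 p q)
      then show ?case by (simp add: distrib_left iota_sh_add)
    qed simp
  qed (auto simp: distrib_right iota_sh_add)
qed

lemma keys_add_nat: "keys (a + b :: 'a \<Rightarrow>\<^sub>0 nat) = keys a \<union> keys b"
  by (auto simp: in_keys_iff lookup_add)

lemma keys_lpmon: "keys (lpmon k u) = {(u ! t, k + t + 1) | t. t < length u}"
proof -
  have "x \<in> keys (lpmon k u) \<longleftrightarrow> x \<in> {(u ! t, k + t + 1) | t. t < length u}" for x
  proof -
    obtain a c where x: "x = (a, c)" by force
    have "k < c \<and> c \<le> k + length u \<and> u ! (c - k - 1) = a \<longleftrightarrow> (\<exists>t. (a, c) = (u ! t, k + t + 1) \<and> t < length u)"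
    proof
      assume H: "k < c \<and> c \<le> k + length u \<and> u ! (c - k - 1) = a"
      then have "c = k + (c - k - 1) + 1" "c - k - 1 < length u" by linarith+
      then show "\<exists>t. (a, c) = (u ! t, k + t + 1) \<and> t < length u" using H by metis
    next
      assume "\<exists>t. (a, c) = (u ! t, k + t + 1) \<and> t < length u"
      then obtain t where "a = u ! t" "c = k + t + 1" "t < length u" by auto
      moreover have "c - k - 1 = t" using \<open>c = k + t + 1\<close> by linarith
      ultimately show "k < c \<and> c \<le> k + length u \<and> u ! (c - k - 1) = a" by simp
    qed
    then show ?thesis unfolding x in_keys_iff lookup_lpmon by auto
  qed
  then show ?thesis by blast
qed

definition in_letters :: "nat \<Rightarrow> ((nat \<times> nat) \<Rightarrow>\<^sub>0 nat) \<Rightarrow> bool" where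
  "in_letters n m \<longleftrightarrow> (\<forall>x\<in>keys m. 1 \<le> fst x \<and> fst x \<le> n)"

lemma in_letters_add: "in_letters n (a + b) \<longleftrightarrow> in_letters n a \<and> in_letters n b"
  by (auto simp: in_letters_def keys_add_nat)

lemma in_letters_lpmon: "in_letters n (lpmon k u) \<longleftrightarrow> set u \<subseteq> {1..n}"
proof -
  have "in_letters n (lpmon k u) \<longleftrightarrow> (\<forall>t<length u. 1 \<le> u ! t \<and> u ! t \<le> n)"
    unfolding in_letters_def keys_lpmon by auto
  also have "\<dots> \<longleftrightarrow> set u \<subseteq> {1..n}"
    by (auto simp: subset_iff in_set_conv_nth)
  finally show ?thesis .
qed

lemma lookup_lpmon_le1: "lookup (lpmon k u) x \<le> 1"
  by (simp add: lookup_lpmon_pair)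

lemma lpmon_eq_add_lpmon:
  assumes H: "lpmon k u = m + lpmon k' w" and w: "w \<noteq> []"
  shows "\<exists>u1 u2. u = u1 @ w @ u2 \<and> k' = k + length u1 \<and> m = lpmon k u1 + lpmon (k' + length w) u2"
proof -
  have L: "k < k' + t + 1 \<and> k' + t + 1 \<le> k + length u \<and> u ! (k' + t - k) = w ! t" if t: "t < length w" for t
  proof -
    have "lookup (lpmon k' w) (w ! t, k' + t + 1) = 1" using t by (simp add: lookup_lpmon)
    then have "lookup (lpmon k u) (w ! t, k' + t + 1) \<noteq> 0" using H by (simp add: lookup_add)
    moreover have "k' + t + 1 - k - 1 = k' + t - k" by simp
    ultimately show ?thesis unfolding lookup_lpmon by (auto split: if_splits)
  qed
  have kk: "k \<le> k'" using L[of 0] w by simp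
  have "k' + (length w - 1) + 1 \<le> k + length u" using L[of "length w - 1"] w by simp
  moreover have "0 < length w" using w by simp
  ultimately have kl: "k' + length w \<le> k + length u" by linarith
  define u1 where "u1 = take (k' - k) u"
  define u2 where "u2 = drop (k' - k + length w) u"
  define mid where "mid = take (length w) (drop (k' - k) u)"
  have lu1: "length u1 = k' - k" using kk kl by (simp add: u1_def)
  have "mid = w"
  proof (rule nth_equalityI)
    show "length mid = length w" using kk kl by (simp add: mid_def)
    fix t assume "t < length mid"
    then have t: "t < length w" using kk kl by (simp add: mid_def)
    have "mid ! t = u ! (k' - k + t)" using t kk kl by (simp add: mid_def)
    also have "k' - k + t = k' + t - k" using kk by simp
    finally show "mid ! t = w ! t" using L[OF t] by simp
  qed
  have u: "u = u1 @ w @ u2"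
  proof -
    have "u = take (k' - k) u @ drop (k' - k) u" by simp
    also have "drop (k' - k) u = mid @ u2"
      unfolding mid_def u2_def by (metis append_take_drop_id drop_drop add.commute)
    finally show ?thesis using \<open>mid = w\<close> u1_def by simp
  qed
  have k': "k' = k + length u1" using lu1 kk by simp
  have "lpmon k u = lpmon k u1 + lpmon k' w + lpmon (k' + length w) u2"
    unfolding u by (simp add: lpmon_append k' add.assoc)
  then have "m + lpmon k' w = (lpmon k u1 + lpmon (k' + length w) u2) + lpmon k' w"
    using H by (simp add: ac_simps)
  then have "m = lpmon k u1 + lpmon (k' + length w) u2" by simp
  with u k' show ?thesis by blast
qed

lemma lpmon_eq_lpmon_add:
  assumes H: "lpmon k u = lpmon k w + m"
  shows "\<exists>v. u = w @ v \<and> m = lpmon (k + length w) v"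
proof (cases "w = []")
  case True
  then show ?thesis using H by simp
next
  case False
  from lpmon_eq_add_lpmon[of k u m k w] H False obtain u1 u2 where
    "u = u1 @ w @ u2" "k = k + length u1" "m = lpmon k u1 + lpmon (k + length w) u2"
    by (auto simp: ac_simps)
  then show ?thesis by auto
qed

section \<open>Reading off letterplace monomials\<close>

definition phi :: "nat \<Rightarrow> nat \<Rightarrow> 'k::zero cpoly \<Rightarrow> 'k fpoly" where
  "phi k e P = Abs_poly_mapping (\<lambda>u. if length u = e then lookup P (lpmon k u) else 0)"

lemma inj_lpmon: "inj (lpmon k)"
  by (rule injI) (rule lpmon_inj)

lemma lookup_phi: "lookup (phi k e P) u = (if length u = e then lookup P (lpmon k u) else 0)"
proof -
  have "{u. (if length u = e then lookup P (lpmon k u) else 0) \<noteq> 0} \<subseteq> lpmon k -` keys P"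
    by (auto simp: in_keys_iff split: if_splits)
  moreover have "finite (lpmon k -` keys P)"
    by (rule finite_vimageI) (auto simp: inj_lpmon)
  ultimately have "finite {u. (if length u = e then lookup P (lpmon k u) else 0) \<noteq> 0}"
    by (rule finite_subset)
  then show ?thesis unfolding phi_def by simp
qed

lemma phi_add: "phi k e (P + Q) = phi k e P + phi k e Q"
  by (rule poly_mapping_eqI) (simp add: lookup_phi lookup_add)
lemma phi_zero[simp]: "phi k e 0 = 0"
  by (rule poly_mapping_eqI) (simp add: lookup_phi)
lemma phi_diff: "phi k e (P - Q) = phi k e P - phi k e Q"
  by (rule poly_mapping_eqI) (simp add: lookup_phi lookup_minus)
lemma phi_sum: "phi k e (sum f A) = (\<Sum>x\<in>A. phi k e (f x))"
  by (rule poly_mapping_eqI) (simp add: lookup_phi lookup_sum)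

lemma phi_single_lpmon: "phi k e (single (lpmon k u) c) = (if length u = e then single u c else 0)"
  by (rule poly_mapping_eqI) (auto simp: lookup_phi lookup_single when_def lpmon_eq_iff)

lemma phi_single_not_lpmon: "(\<And>u::nat list. length u = e \<Longrightarrow> lpmon k u \<noteq> m) \<Longrightarrow> phi k e (single m c) = 0"
  by (rule poly_mapping_eqI) (auto simp: lookup_phi lookup_single when_def)

lemma phi_iota_sh: "phi k e (iota_sh k f) = fcomp e f"
  by (induction f rule: poly_mapping_induct)
    (auto simp: iota_sh_single phi_single_lpmon fcomp_single iota_sh_add phi_add fcomp_add)

lemma phi_phom_other: assumes "phom l P" "l \<noteq> e" shows "phi k e P = 0"
proof (rule poly_mapping_eqI)
  fix u :: "nat list"
  have "length u = e \<Longrightarrow> lpmon k u \<notin> keys P"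
    using assms cdeg_lpmon[of k u] unfolding phom_def by auto
  then show "lookup (phi k e P) u = lookup 0 u" by (auto simp: lookup_phi in_keys_iff)
qed

lemma phi_Pdcar_beyond:
  assumes "P \<in> Pdcar n d" "d < k + e" "0 < e"
  shows "phi k e P = 0"
proof (rule poly_mapping_eqI)
  fix u :: "nat list"
  show "lookup (phi k e P) u = lookup 0 u"
  proof (cases "length u = e")
    case True
    have "(u ! (e - 1), k + (e - 1) + 1) \<in> keys (lpmon k u)"
      unfolding keys_lpmon using True assms(3) by auto
    moreover have "k + (e - 1) + 1 = k + e" using assms(3) by simp
    ultimately have "lpmon k u \<notin> keys P" using assms(1,2) unfolding Pdcar_def by fastforce
    then show ?thesis by (simp add: lookup_phi in_keys_iff)
  qed (simp add: lookup_phi)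
qed

lemma phi_iota_sh_fhom_times:
  assumes "fhom l f"
  shows "phi k e (iota_sh k f * a) = (if l \<le> e then f * phi (k + l) (e - l) a else 0)"
proof -
  have H: "\<forall>w\<in>keys f. length w = l" using assms by (simp add: fhom_def)
  show ?thesis
  proof (rule poly_mapping_induct_keys[of "\<lambda>f. phi k e (iota_sh k f * a) = (if l \<le> e then f * phi (k + l) (e - l) a else 0)" f])
    fix w x assume w: "w \<in> keys f"
    then have lw: "length w = l" using H by auto
    show "phi k e (iota_sh k (single w x) * a) = (if l \<le> e then single w x * phi (k + l) (e - l) a else 0)"
    proof (induction a rule: poly_mapping_induct)
      case (2 m y)
      have lhs: "iota_sh k (single w x) * single m y = single (lpmon k w + m) (x * y)"
        by (simp add: iota_sh_single mult_single)
      show ?case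
      proof (cases "l \<le> e \<and> (\<exists>v. length v = e - l \<and> lpmon (k + l) v = m)")
        case True
        then obtain v where v: "length v = e - l" "lpmon (k + l) v = m" "l \<le> e" by auto
        have "phi k e (single (lpmon k w + m) (x * y)) = single (w @ v) (x * y)"
          using phi_single_lpmon[of k e "w @ v" "x * y"] v lw by (simp add: lpmon_append)
        moreover have "phi (k + l) (e - l) (single m y) = single v y"
          using phi_single_lpmon[of "k + l" "e - l" v y] v by simp
        ultimately show ?thesis using lhs v by (simp add: single_times_single)
      next
        case False
        have "phi k e (single (lpmon k w + m) (x * y)) = 0"
        proof (rule phi_single_not_lpmon)
          fix u :: "nat list" assume lu: "length u = e"
          show "lpmon k u \<noteq> lpmon k w + m"
          proof
            assume "lpmon k u = lpmon k w + m"
            from lpmon_eq_lpmon_add[OF this] obtain v where "u = w @ v" "m = lpmon (k + length w) v" by blast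
            then show False using False lu lw by auto
          qed
        qed
        moreover have "l \<le> e \<Longrightarrow> phi (k + l) (e - l) (single m y) = 0"
          using False by (intro phi_single_not_lpmon) auto
        ultimately show ?thesis using lhs by auto
      qed
    next
      case (3 p q)
      then show ?case by (simp add: distrib_left phi_add)
    qed simp
  qed (auto simp: distrib_right iota_sh_add phi_add)
qed

lemma phi_X_times:
  assumes "l \<le> k"
  shows "phi k e (X i l * (a::'k::comm_ring_1 cpoly)) = 0"
proof (induction a rule: poly_mapping_induct)
  case (2 m y)
  have "X i l * single m y = single (single (i, l) 1 + m) y" by (simp add: X_def mult_single)
  moreover have "phi k e (single (single (i, l) 1 + m) y) = 0"
  proof (rule phi_single_not_lpmon)
    fix u :: "nat list" assume "length u = e"
    have "lookup (single (i, l) 1 + m) (i, l) \<noteq> 0" by (simp add: lookup_add)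
    moreover have "lookup (lpmon k u) (i, l) = 0" using assms by (simp add: lookup_lpmon)
    ultimately show "lpmon k u \<noteq> single (i, l) 1 + m" by auto
  qed
  ultimately show ?case by simp
qed (simp_all add: distrib_left phi_add)

lemma Fcar_phi:
  assumes "a \<in> Pcar n"
  shows "phi k e a \<in> Fcar n"
  unfolding Fcar_iff
proof (intro ballI)
  fix u assume "u \<in> keys (phi k e a)"
  then have "lpmon k u \<in> keys a" by (auto simp: lookup_phi in_keys_iff split: if_splits)
  then have "in_letters n (lpmon k u)" using assms unfolding Pcar_def in_letters_def by fastforce
  then show "set u \<subseteq> {1..n}" by (simp add: in_letters_lpmon)
qed

section \<open>The letterplace ideal\<close>

lemma Pcar_iff: "p \<in> Pcar n \<longleftrightarrow> (\<forall>m\<in>keys p. \<forall>x\<in>keys m. 1 \<le> fst x \<and> fst x \<le> n \<and> 1 \<le> snd x)"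
  by (simp add: Pcar_def case_prod_unfold)

lemma Pdcar_iff: "p \<in> Pdcar n d \<longleftrightarrow> (\<forall>m\<in>keys p. \<forall>x\<in>keys m. 1 \<le> fst x \<and> fst x \<le> n \<and> 1 \<le> snd x \<and> snd x \<le> d)"
  by (simp add: Pdcar_def case_prod_unfold)

lemma Pcar_add: "p \<in> Pcar n \<Longrightarrow> q \<in> Pcar n \<Longrightarrow> p + q \<in> Pcar n"
  using keys_add[of p q] unfolding Pcar_iff by blast
lemma Pdcar_add: "p \<in> Pdcar n d \<Longrightarrow> q \<in> Pdcar n d \<Longrightarrow> p + q \<in> Pdcar n d"
  using keys_add[of p q] unfolding Pdcar_iff by blast
lemma Pcar_uminus: "p \<in> Pcar n \<Longrightarrow> - p \<in> Pcar n"
  unfolding Pcar_iff by simp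
lemma Pcar_mult: "p \<in> Pcar n \<Longrightarrow> q \<in> Pcar n \<Longrightarrow> (p :: 'k::comm_ring_1 cpoly) * q \<in> Pcar n"
  using keys_mult[of p q] unfolding Pcar_iff by (fastforce simp: keys_add_nat)
lemma Pcar_one: "(1 :: 'k::comm_ring_1 cpoly) \<in> Pcar n"
proof -
  have "(1 :: 'k cpoly) = single 0 1" by simp
  then show ?thesis unfolding Pcar_iff by simp
qed
lemma Pcar_zero[simp]: "0 \<in> Pcar n"
  unfolding Pcar_iff by simp
lemma Pdcar_zero[simp]: "0 \<in> Pdcar n d"
  unfolding Pdcar_iff by simp
lemma Pdcar_Pcar: "p \<in> Pdcar n d \<Longrightarrow> p \<in> Pcar n"
  unfolding Pdcar_iff Pcar_iff by blast
lemma Pcar_minus_one: "(- 1 :: 'k::comm_ring_1 cpoly) \<in> Pcar n"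
  by (rule Pcar_uminus) (rule Pcar_one)

lemma Pcar_iota_sh:
  assumes "f \<in> Fcar n"
  shows "iota_sh k f \<in> Pcar n"
proof (rule poly_mapping_induct_keys[of "\<lambda>q. iota_sh k q \<in> Pcar n" f])
  fix w c assume "w \<in> keys f"
  then have "set w \<subseteq> {1..n}" using assms by (simp add: Fcar_iff)
  then show "iota_sh k (single w c) \<in> Pcar n"
    by (auto simp: iota_sh_single Pcar_iff keys_lpmon subset_iff)
qed (auto simp: iota_sh_add Pcar_add)

lemma Pdcar_iota_sh:
  assumes "f \<in> Fcar n" "fhom l f" "k + l \<le> d"
  shows "iota_sh k f \<in> Pdcar n d"
proof (rule poly_mapping_induct_keys[of "\<lambda>q. iota_sh k q \<in> Pdcar n d" f])
  fix w c assume w: "w \<in> keys f"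
  then have "set w \<subseteq> {1..n}" using assms by (simp add: Fcar_iff)
  moreover have "length w = l" using w assms(2) by (simp add: fhom_def)
  ultimately show "iota_sh k (single w c) \<in> Pdcar n d"
    using assms(3) by (auto simp: iota_sh_single Pdcar_iff keys_lpmon subset_iff)
qed (auto simp: iota_sh_add Pdcar_add)

lemma sum_lessThan_nth_eq_sum_list_map2:
  "length xs = length ys \<Longrightarrow> (\<Sum>t<length xs. f (xs ! t) (ys ! t)) = sum_list (map2 f xs ys)"
  by (induction xs ys rule: list_induct2) (simp_all add: sum.lessThan_Suc_shift del: sum.lessThan_Suc)

lemma LPideal_iff_sum_list: "P \<in> LPideal n I \<longleftrightarrow> (\<exists>as gs. length as = length gs \<and> set as \<subseteq> Pcar n \<and> set gs \<subseteq> LPgens n I \<and>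
   P = sum_list (map2 (*) as gs))"
proof
  assume "P \<in> LPideal n I"
  then obtain as gs where a: "P = (\<Sum>t<length as. as ! t * gs ! t)" "length as = length gs"
    "set as \<subseteq> Pcar n" "set gs \<subseteq> LPgens n I" unfolding LPideal_def by blast
  moreover have "P = sum_list (map2 (*) as gs)" by (simp only: a(1) sum_lessThan_nth_eq_sum_list_map2[OF a(2), where f="(*)"])
  ultimately show "\<exists>as gs. length as = length gs \<and> set as \<subseteq> Pcar n \<and> set gs \<subseteq> LPgens n I \<and>
   P = sum_list (map2 (*) as gs)" by blast
next
  assume "\<exists>as gs. length as = length gs \<and> set as \<subseteq> Pcar n \<and> set gs \<subseteq> LPgens n I \<and>
   P = sum_list (map2 (*) as gs)"
  then obtain as gs where a: "P = sum_list (map2 (*) as gs)" "length as = length gs"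
    "set as \<subseteq> Pcar n" "set gs \<subseteq> LPgens n I" by blast
  moreover have "P = (\<Sum>t<length as. as ! t * gs ! t)" by (simp only: a(1) sum_lessThan_nth_eq_sum_list_map2[OF a(2), where f="(*)"])
  ultimately show "P \<in> LPideal n I" unfolding LPideal_def by blast
qed

context
  fixes n :: nat and I :: "'k::comm_ring_1 fpoly set"
begin

lemma LPideal_zero[simp]: "0 \<in> LPideal n I"
  unfolding LPideal_iff_sum_list by (rule exI[of _ "[]"], rule exI[of _ "[]"]) simp

lemma LPideal_add: "P \<in> LPideal n I \<Longrightarrow> Q \<in> LPideal n I \<Longrightarrow> P + Q \<in> LPideal n I"
  unfolding LPideal_iff_sum_list
proof (elim exE conjE)
  fix as gs bs hs
  assume a: "length as = length gs" "set as \<subseteq> Pcar n" "set gs \<subseteq> LPgens n I" "P = sum_list (map2 (*) as gs)"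
     and b: "length bs = length hs" "set bs \<subseteq> Pcar n" "set hs \<subseteq> LPgens n I" "Q = sum_list (map2 (*) bs hs)"
  show "\<exists>as gs. length as = length gs \<and> set as \<subseteq> Pcar n \<and> set gs \<subseteq> LPgens n I \<and> P + Q = sum_list (map2 (*) as gs)"
    by (rule exI[of _ "as @ bs"], rule exI[of _ "gs @ hs"]) (use a b in \<open>simp add: zip_append\<close>)
qed

lemma LPideal_lmult: "c \<in> Pcar n \<Longrightarrow> P \<in> LPideal n I \<Longrightarrow> c * P \<in> LPideal n I"
  unfolding LPideal_iff_sum_list
proof (elim exE conjE)
  fix as gs
  assume c: "c \<in> Pcar n" and a: "length as = length gs" "set as \<subseteq> Pcar n" "set gs \<subseteq> LPgens n I" "P = sum_list (map2 (*) as gs)"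
  have "c * sum_list (map2 (*) as gs) = sum_list (map2 (*) (map ((*) c) as) gs)"
    using a(1) by (induction as gs rule: list_induct2) (simp_all add: distrib_left mult.assoc)
  moreover have "set (map ((*) c) as) \<subseteq> Pcar n" using a(2) c by (auto intro: Pcar_mult)
  ultimately show "\<exists>as gs. length as = length gs \<and> set as \<subseteq> Pcar n \<and> set gs \<subseteq> LPgens n I \<and> c * P = sum_list (map2 (*) as gs)"
    using a by (intro exI[of _ "map ((*) c) as"] exI[of _ gs]) simp
qed

lemma LPideal_rmult: "c \<in> Pcar n \<Longrightarrow> P \<in> LPideal n I \<Longrightarrow> P * c \<in> LPideal n I"
  by (metis LPideal_lmult mult.commute)

lemma LPideal_gen: "a \<in> Pcar n \<Longrightarrow> g \<in> LPgens n I \<Longrightarrow> a * g \<in> LPideal n I"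
  unfolding LPideal_iff_sum_list by (intro exI[of _ "[a]"] exI[of _ "[g]"]) simp

lemma LPideal_uminus: "P \<in> LPideal n I \<Longrightarrow> - P \<in> LPideal n I"
  using LPideal_lmult[OF Pcar_minus_one] by simp

lemma LPideal_diff: "P \<in> LPideal n I \<Longrightarrow> Q \<in> LPideal n I \<Longrightarrow> P - Q \<in> LPideal n I"
  using LPideal_add[of P "- Q"] LPideal_uminus[of Q] by (simp only: diff_conv_add_uminus)

lemma LPideal_sum: "(\<And>x. x \<in> A \<Longrightarrow> f x \<in> LPideal n I) \<Longrightarrow> sum f A \<in> LPideal n I"
  by (induction A rule: infinite_finite_induct) (auto intro: LPideal_add)

lemma LPideal_iota_sh: assumes "p \<in> I" shows "iota_sh k p \<in> LPideal n I"
proof -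
  have "iota_sh k p \<in> LPgens n I" unfolding LPgens_def using assms by blast
  from LPideal_gen[OF Pcar_one this] show ?thesis by simp
qed

lemma LPideal_diff_trans: "P - Q \<in> LPideal n I \<Longrightarrow> Q - R \<in> LPideal n I \<Longrightarrow> P - R \<in> LPideal n I"
  using LPideal_add[of "P - Q" "Q - R"] by simp

lemma LPideal_diff_sym: "P - Q \<in> LPideal n I \<Longrightarrow> Q - P \<in> LPideal n I"
  using LPideal_uminus[of "P - Q"] by simp

end

lemma phi_times_Q_gen:
  "phi k e (single m c * (X i j * X i' j) :: 'k::comm_ring_1 cpoly) = 0"
proof -
  have "single m c * (X i j * X i' j) = single (m + single (i, j) 1 + single (i', j) 1) c"
    by (simp add: X_def mult_single add.assoc)
  moreover have "phi k e (single (m + single (i, j) 1 + single (i', j) 1) c) = 0"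
  proof (rule phi_single_not_lpmon)
    fix u :: "nat list"
    let ?M = "m + single (i, j) 1 + single (i', j) 1"
    show "lpmon k u \<noteq> ?M"
    proof
      assume H: "lpmon k u = ?M"
      show False
      proof (cases "i = i'")
        case True
        have "lookup ?M (i, j) \<ge> 2" using True by (simp add: lookup_add)
        then show False using H lookup_lpmon_le1[of k u "(i, j)"] by simp
      next
        case False
        have "lookup ?M (i, j) \<noteq> 0" "lookup ?M (i', j) \<noteq> 0" by (simp_all add: lookup_add)
        then have "lookup (lpmon k u) (i, j) \<noteq> 0" "lookup (lpmon k u) (i', j) \<noteq> 0" using H by simp_all
        then have "u ! (j - k - 1) = i" "u ! (j - k - 1) = i'" by (simp_all add: lookup_lpmon split: if_splits)
        then show False using False by simp
      qed
    qed
  qed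
  ultimately show ?thesis by simp
qed

context graded_quotient
begin

lemma phi_times_iota_sh_fhom_ideal:
  assumes p: "p \<in> I" "fhom l p" and m: "in_letters n m"
  shows "phi k e (single m c * iota_sh k' p) \<in> I"
proof (cases "\<exists>w\<in>keys p. \<exists>u. length u = e \<and> lpmon k u = m + lpmon k' w")
  case True
  then obtain w u where w: "w \<in> keys p" and u: "length u = e" "lpmon k u = m + lpmon k' w" by blast
  have lw: "length w = l" using w p(2) by (simp add: fhom_def)
  obtain u1 u2 where U: "\<forall>w'. length w' = l \<longrightarrow> m + lpmon k' w' = lpmon k (u1 @ w' @ u2)"
      and L: "set u1 \<subseteq> {1..n}" "set u2 \<subseteq> {1..n}"
  proof (cases "w = []")
    case True
    then have "m = lpmon k u" using u by simp
    moreover have "l = 0" using True lw by simp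
    ultimately show ?thesis using m by (intro that[of u "[]"]) (auto simp: in_letters_lpmon)
  next
    case False
    from lpmon_eq_add_lpmon[OF u(2) False] obtain u1 u2 where
      "u = u1 @ w @ u2" "k' = k + length u1" and mm: "m = lpmon k u1 + lpmon (k' + length w) u2" by blast
    then have "\<forall>w'. length w' = l \<longrightarrow> m + lpmon k' w' = lpmon k (u1 @ w' @ u2)"
      using lw by (auto simp: lpmon_append ac_simps)
    moreover have "set u1 \<subseteq> {1..n}" "set u2 \<subseteq> {1..n}"
      using m unfolding mm by (simp_all add: in_letters_add in_letters_lpmon)
    ultimately show ?thesis by (rule that)
  qed
  have H: "\<forall>w\<in>keys p. length w = l" using p(2) by (simp add: fhom_def)
  have eq: "single m c * iota_sh k' p = iota_sh k (single u1 c * p * single u2 1)"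
  proof (rule poly_mapping_induct_keys[of "\<lambda>q. single m c * iota_sh k' q = iota_sh k (single u1 c * q * single u2 1)" p])
    fix w x assume "w \<in> keys p"
    then have "length w = l" using H by auto
    then show "single m c * iota_sh k' (single w x) = iota_sh k (single u1 c * single w x * single u2 1)"
      using U by (simp add: iota_sh_single single_times_single mult_single)
  qed (auto simp: distrib_left distrib_right iota_sh_add)
  have "single u1 c * p * single u2 1 \<in> I"
    using ideal_rmult[OF _ ideal_lmult[OF _ p(1)]] Fcar_single L by blast
  then show ?thesis unfolding eq phi_iota_sh using ideal_fcomp by blast
next
  case False
  have H: "\<forall>w\<in>keys p. length w = l" using p(2) by (simp add: fhom_def)
  have "phi k e (single m c * iota_sh k' p) = 0"
  proof (rule poly_mapping_induct_keys[of "\<lambda>q. phi k e (single m c * iota_sh k' q) = 0" p])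
    fix w x assume w: "w \<in> keys p"
    show "phi k e (single m c * iota_sh k' (single w x)) = 0"
      unfolding iota_sh_single mult_single
      by (rule phi_single_not_lpmon) (use False w in auto)
  qed (auto simp: distrib_left iota_sh_add phi_add)
  then show ?thesis using ideal_zero by simp
qed

lemma phi_times_iota_sh_ideal:
  assumes p: "p \<in> I" and m: "in_letters n m"
  shows "phi k e (single m c * iota_sh k' p) \<in> I"
proof -
  obtain N where N: "(\<Sum>l<N. fcomp l p) = p" using ex_sum_fcomp_eq by blast
  have "phi k e (single m c * iota_sh k' p) = (\<Sum>l<N. phi k e (single m c * iota_sh k' (fcomp l p)))"
    by (subst N[symmetric]) (simp add: iota_sh_sum sum_distrib_left phi_sum)
  also have "\<dots> \<in> I"
    by (rule ideal_sum) (rule phi_times_iota_sh_fhom_ideal[OF ideal_fcomp[OF p] fhom_fcomp m])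
  finally show ?thesis .
qed

lemma phi_times_LPgen:
  assumes a: "a \<in> Pcar n" and g: "g \<in> LPgens n I"
  shows "phi k e (a * g) \<in> I"
proof (rule poly_mapping_induct_keys[of "\<lambda>q. phi k e (q * g) \<in> I" a])
  fix m c assume "m \<in> keys a"
  then have m: "in_letters n m" using a unfolding Pcar_iff in_letters_def by auto
  from g show "phi k e (single m c * g) \<in> I"
    unfolding LPgens_def
  proof (elim UnE CollectE exE conjE)
    fix i i' j assume "g = X i j * X i' j"
    then have "phi k e (single m c * g) = 0" using phi_times_Q_gen by simp
    then show ?thesis using ideal_zero by simp
  next
    fix k' p assume "g = iota_sh k' p" "p \<in> I"
    then show ?thesis using phi_times_iota_sh_ideal m by simp
  qed
qed (auto simp: distrib_right phi_add ideal_add ideal_zero)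

lemma phi_LPideal:
  assumes "P \<in> LPideal n I"
  shows "phi k e P \<in> I"
proof -
  from assms obtain as gs where a: "length as = length gs" "set as \<subseteq> Pcar n" "set gs \<subseteq> LPgens n I"
    "P = sum_list (map2 (*) as gs)" unfolding LPideal_iff_sum_list by blast
  have "phi k e (sum_list (map2 (*) as gs)) \<in> I"
    using a(1-3) by (induction as gs rule: list_induct2) (auto simp: phi_add ideal_add ideal_zero phi_times_LPgen)
  then show ?thesis using a(4) by simp
qed

lemma ideal_if_iota_sh_LPideal:
  assumes "iota_sh k f \<in> LPideal n I"
  shows "f \<in> I"
proof -
  obtain N where N: "(\<Sum>l<N. fcomp l f) = f" using ex_sum_fcomp_eq by blast
  have "(\<Sum>l<N. phi k l (iota_sh k f)) \<in> I"
    by (rule ideal_sum) (rule phi_LPideal[OF assms])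
  then show ?thesis using N by (simp add: phi_iota_sh)
qed

end

lemma rspanA_iff_sum_list: "rspanA n I m G v \<longleftrightarrow> (\<exists>gs as. length as = length gs \<and> set gs \<subseteq> G \<and> set as \<subseteq> Fcar n \<and>
      vequivA I m v (\<lambda>i. sum_list (map2 (\<lambda>g a. g i * a) gs as)))"
  unfolding rspanA_def
  by (intro ex_cong1 conj_cong refl arg_cong[where f="vequivA I m v"] ext)
    (simp add: fmul_eq_times sum_lessThan_nth_eq_sum_list_map2[of gs as "\<lambda>g a. g _ * a" for gs as])

lemma spanSd_iff_sum_list: "spanSd n I d m G v \<longleftrightarrow> (\<exists>gs as. length as = length gs \<and> set gs \<subseteq> G \<and> set as \<subseteq> Pdcar n d \<and>
      vequivS n I m v (\<lambda>i. sum_list (map2 (\<lambda>g a. g i * a) gs as)))"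
  unfolding spanSd_def
  by (intro ex_cong1 conj_cong refl arg_cong[where f="vequivS n I m v"] ext)
    (simp add: sum_lessThan_nth_eq_sum_list_map2[of gs as "\<lambda>g a. g _ * a" for gs as])

lemma times_single_Nil_minus_one: "(p::'k::ring_1 fpoly) * single [] (-1) = - p"
  by (induction p rule: poly_mapping_induct) (auto simp: single_times_single distrib_right single_uminus)

lemma times_single_Nil_one: "(p::'k::ring_1 fpoly) * single [] 1 = p"
  by (induction p rule: poly_mapping_induct) (auto simp: single_times_single distrib_right)

context graded_quotient
begin

lemma vequivA_refl: "vequivA I m v v"
  by (simp add: vequivA_def ideal_zero)
lemma vequivA_sym: "vequivA I m v w \<Longrightarrow> vequivA I m w v"
  by (simp add: vequivA_def ideal_diff_sym)
lemma vequivA_trans: "vequivA I m u v \<Longrightarrow> vequivA I m v w \<Longrightarrow> vequivA I m u w"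
  unfolding vequivA_def using ideal_diff_trans by blast
lemma vequivA_add: "vequivA I m u v \<Longrightarrow> vequivA I m u' v' \<Longrightarrow> vequivA I m (\<lambda>i. u i + u' i) (\<lambda>i. v i + v' i)"
proof -
  have e: "(a + b) - (c + d) = (a - c) + (b - d)" for a b c d :: "'k fpoly" by simp
  show "vequivA I m u v \<Longrightarrow> vequivA I m u' v' \<Longrightarrow> vequivA I m (\<lambda>i. u i + u' i) (\<lambda>i. v i + v' i)"
    unfolding vequivA_def e using ideal_add by blast
qed
lemma vequivA_rmult: "vequivA I m u v \<Longrightarrow> c \<in> Fcar n \<Longrightarrow> vequivA I m (\<lambda>i. u i * c) (\<lambda>i. v i * c)"
  unfolding vequivA_def using ideal_rmult by (simp add: left_diff_distrib[symmetric])

lemma rspanA_zero: "rspanA n I m G (\<lambda>i. 0)"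
  unfolding rspanA_iff_sum_list by (rule exI[where x="[]"], rule exI[where x="[]"]) (simp add: vequivA_refl)

lemma rspanA_vequivA: "rspanA n I m G v \<Longrightarrow> vequivA I m v' v \<Longrightarrow> rspanA n I m G v'"
  unfolding rspanA_iff_sum_list using vequivA_trans by blast

lemma rspanA_add:
  assumes "rspanA n I m G v" "rspanA n I m G w"
  shows "rspanA n I m G (\<lambda>i. v i + w i)"
proof -
  obtain gs as where a: "length as = length gs" "set gs \<subseteq> G" "set as \<subseteq> Fcar n"
      "vequivA I m v (\<lambda>i. sum_list (map2 (\<lambda>g a. g i * a) gs as))" using assms(1) unfolding rspanA_iff_sum_list by blast
  obtain hs bs where b: "length bs = length hs" "set hs \<subseteq> G" "set bs \<subseteq> Fcar n"
      "vequivA I m w (\<lambda>i. sum_list (map2 (\<lambda>g a. g i * a) hs bs))" using assms(2) unfolding rspanA_iff_sum_list by blast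
  have "vequivA I m (\<lambda>i. v i + w i) (\<lambda>i. sum_list (map2 (\<lambda>g a. g i * a) (gs @ hs) (as @ bs)))"
    using vequivA_add[OF a(4) b(4)] a(1) b(1) by (simp add: zip_append)
  then show ?thesis unfolding rspanA_iff_sum_list using a b
    by (intro exI[where x="gs @ hs"] exI[where x="as @ bs"]) auto
qed

lemma rspanA_gen: "u \<in> G \<Longrightarrow> b \<in> Fcar n \<Longrightarrow> rspanA n I m G (\<lambda>i. u i * b)"
  unfolding rspanA_iff_sum_list by (intro exI[where x="[u]"] exI[where x="[b]"]) (simp add: vequivA_refl)

lemma rspanA_base: "u \<in> G \<Longrightarrow> rspanA n I m G u"
  using rspanA_gen[of u G "single [] 1" m] Fcar_single[of "[]" n 1]
  by (simp add: times_single_Nil_one)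

lemma rspanA_rmult:
  assumes "rspanA n I m G v" "c \<in> Fcar n"
  shows "rspanA n I m G (\<lambda>i. v i * c)"
proof -
  obtain gs as where a: "length as = length gs" "set gs \<subseteq> G" "set as \<subseteq> Fcar n"
      "vequivA I m v (\<lambda>i. sum_list (map2 (\<lambda>g a. g i * a) gs as))" using assms(1) unfolding rspanA_iff_sum_list by blast
  have "sum_list (map2 (\<lambda>g a. g i * a) gs as) * c = sum_list (map2 (\<lambda>g a. g i * a) gs (map (\<lambda>a. a * c) as))" for i
    using a(1) by (induction as gs rule: list_induct2) (simp_all add: distrib_right mult.assoc)
  then have "vequivA I m (\<lambda>i. v i * c) (\<lambda>i. sum_list (map2 (\<lambda>g a. g i * a) gs (map (\<lambda>a. a * c) as)))"
    using vequivA_rmult[OF a(4) assms(2)] by simp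
  moreover have "set (map (\<lambda>a. a * c) as) \<subseteq> Fcar n" using a(3) assms(2) by (auto intro: Fcar_mult)
  ultimately show ?thesis unfolding rspanA_iff_sum_list using a
    by (intro exI[where x="gs"] exI[where x="map (\<lambda>a. a * c) as"]) auto
qed

lemma rspanA_mono: "rspanA n I m G v \<Longrightarrow> G \<subseteq> G' \<Longrightarrow> rspanA n I m G' v"
  unfolding rspanA_iff_sum_list by blast

lemma rspanA_sum:
  "(\<And>x. x \<in> A \<Longrightarrow> rspanA n I m G (f x)) \<Longrightarrow> rspanA n I m G (\<lambda>i. \<Sum>x\<in>A. f x i)"
proof (induction A rule: infinite_finite_induct)
  case (insert x F)
  then have "rspanA n I m G (\<lambda>i. f x i + (\<Sum>x\<in>F. f x i))" by (intro rspanA_add) auto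
  then show ?case using insert by simp
qed (simp_all add: rspanA_zero)

lemma rspanA_trans:
  assumes "rspanA n I m G v" "\<And>u. u \<in> G \<Longrightarrow> rspanA n I m G' u"
  shows "rspanA n I m G' v"
proof -
  obtain gs as where a: "length as = length gs" "set gs \<subseteq> G" "set as \<subseteq> Fcar n"
      "vequivA I m v (\<lambda>i. sum_list (map2 (\<lambda>g a. g i * a) gs as))" using assms(1) unfolding rspanA_iff_sum_list by blast
  have "rspanA n I m G' (\<lambda>i. sum_list (map2 (\<lambda>g a. g i * a) gs as))"
    using a(1-3)
  proof (induction as gs rule: list_induct2)
    case Nil
    then show ?case by (simp add: rspanA_zero)
  next
    case (Cons a as g gs)
    have "rspanA n I m G' (\<lambda>i. g i * a)" using Cons by (intro rspanA_rmult assms(2)) auto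
    moreover have "rspanA n I m G' (\<lambda>i. sum_list (map2 (\<lambda>g a. g i * a) gs as))" using Cons by auto
    ultimately have "rspanA n I m G' (\<lambda>i. g i * a + sum_list (map2 (\<lambda>g a. g i * a) gs as))"
      by (rule rspanA_add)
    then show ?case by simp
  qed
  then show ?thesis using rspanA_vequivA a(4) by blast
qed

lemma rspanA_uminus: "rspanA n I m G v \<Longrightarrow> rspanA n I m G (\<lambda>i. - v i)"
  using rspanA_rmult[of m G v "single [] (-1)"] Fcar_single[of "[]" n "-1"] by (simp add: times_single_Nil_minus_one)

lemma rspanA_diff: "rspanA n I m G v \<Longrightarrow> rspanA n I m G w \<Longrightarrow> rspanA n I m G (\<lambda>i. v i - w i)"
  using rspanA_add[of m G v "\<lambda>i. - w i"] rspanA_uminus[of m G w] by simp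

end

context
  fixes n :: nat and I :: "'k::field fpoly set"
begin

lemma vequivS_refl: "vequivS n I m v v"
  by (simp add: vequivS_def)
lemma vequivS_sym: "vequivS n I m v w \<Longrightarrow> vequivS n I m w v"
  by (simp add: vequivS_def LPideal_diff_sym)
lemma vequivS_trans: "vequivS n I m u v \<Longrightarrow> vequivS n I m v w \<Longrightarrow> vequivS n I m u w"
  unfolding vequivS_def using LPideal_diff_trans by blast
lemma vequivS_add: "vequivS n I m u v \<Longrightarrow> vequivS n I m u' v' \<Longrightarrow> vequivS n I m (\<lambda>i. u i + u' i) (\<lambda>i. v i + v' i)"
proof -
  have e: "(a + b) - (c + d) = (a - c) + (b - d)" for a b c d :: "'k cpoly" by simp
  show "vequivS n I m u v \<Longrightarrow> vequivS n I m u' v' \<Longrightarrow> vequivS n I m (\<lambda>i. u i + u' i) (\<lambda>i. v i + v' i)"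
    unfolding vequivS_def e using LPideal_add by blast
qed
lemma vequivS_rmult: "vequivS n I m u v \<Longrightarrow> c \<in> Pcar n \<Longrightarrow> vequivS n I m (\<lambda>i. u i * c) (\<lambda>i. v i * c)"
  unfolding vequivS_def left_diff_distrib[symmetric] using LPideal_rmult by blast

lemma spanSd_zero: "spanSd n I d m G (\<lambda>i. 0)"
  unfolding spanSd_iff_sum_list by (rule exI[where x="[]"], rule exI[where x="[]"]) (simp add: vequivS_refl)

lemma spanSd_vequivS: "spanSd n I d m G v \<Longrightarrow> vequivS n I m v' v \<Longrightarrow> spanSd n I d m G v'"
  unfolding spanSd_iff_sum_list using vequivS_trans by blast

lemma spanSd_add:
  assumes "spanSd n I d m G v" "spanSd n I d m G w"
  shows "spanSd n I d m G (\<lambda>i. v i + w i)"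
proof -
  obtain gs as where a: "length as = length gs" "set gs \<subseteq> G" "set as \<subseteq> Pdcar n d"
      "vequivS n I m v (\<lambda>i. sum_list (map2 (\<lambda>g a. g i * a) gs as))" using assms(1) unfolding spanSd_iff_sum_list by blast
  obtain hs bs where b: "length bs = length hs" "set hs \<subseteq> G" "set bs \<subseteq> Pdcar n d"
      "vequivS n I m w (\<lambda>i. sum_list (map2 (\<lambda>g a. g i * a) hs bs))" using assms(2) unfolding spanSd_iff_sum_list by blast
  have "vequivS n I m (\<lambda>i. v i + w i) (\<lambda>i. sum_list (map2 (\<lambda>g a. g i * a) (gs @ hs) (as @ bs)))"
    using vequivS_add[OF a(4) b(4)] a(1) b(1) by (simp add: zip_append)
  then show ?thesis unfolding spanSd_iff_sum_list using a b
    by (intro exI[where x="gs @ hs"] exI[where x="as @ bs"]) auto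
qed

lemma spanSd_gen: "u \<in> G \<Longrightarrow> b \<in> Pdcar n d \<Longrightarrow> spanSd n I d m G (\<lambda>i. u i * b)"
  unfolding spanSd_iff_sum_list by (intro exI[where x="[u]"] exI[where x="[b]"]) (simp add: vequivS_refl)

lemma spanSd_sum:
  "(\<And>x. x \<in> A \<Longrightarrow> spanSd n I d m G (f x)) \<Longrightarrow> spanSd n I d m G (\<lambda>i. \<Sum>x\<in>A. f x i)"
proof (induction A rule: infinite_finite_induct)
  case (insert x F)
  then have "spanSd n I d m G (\<lambda>i. f x i + (\<Sum>x\<in>F. f x i))" by (intro spanSd_add) auto
  then show ?case using insert by simp
qed (simp_all add: spanSd_zero)

end

definition vcomp :: "(nat \<Rightarrow> nat) \<Rightarrow> nat \<Rightarrow> (nat \<Rightarrow> 'k::comm_monoid_add fpoly) \<Rightarrow> nat \<Rightarrow> 'k fpoly" where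
  "vcomp \<Delta> e v = (\<lambda>j. if \<Delta> j \<le> e then fcomp (e - \<Delta> j) (v j) else 0)"

text \<open>The module letterplace embedding \<open>\<epsilon>_j f \<mapsto> \<epsilon>'_j \<sigma>^{\<Delta>_j}(\<iota>(f))\<close>.\<close>

definition iota_vec :: "(nat \<Rightarrow> nat) \<Rightarrow> (nat \<Rightarrow> 'k::comm_ring_1 fpoly) \<Rightarrow> nat \<Rightarrow> 'k cpoly" where
  "iota_vec \<Delta> v = (\<lambda>j. iota_sh (\<Delta> j) (v j))"

definition vhom :: "(nat \<Rightarrow> nat) \<Rightarrow> nat \<Rightarrow> (nat \<Rightarrow> 'k::zero fpoly) \<Rightarrow> bool" where
  "vhom \<Delta> e v \<longleftrightarrow> (\<forall>j. if \<Delta> j \<le> e then fhom (e - \<Delta> j) (v j) else v j = 0)"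

lemma vhom_vcomp: "vhom \<Delta> e (vcomp \<Delta> e v)"
  by (simp add: vhom_def vcomp_def fhom_fcomp)

lemma vcomp_vcomp: "vcomp \<Delta> e' (vcomp \<Delta> e v) = (if e = e' then vcomp \<Delta> e v else (\<lambda>j. 0))"
  by (auto simp: vcomp_def fun_eq_iff fcomp_fcomp)

lemma vcomp_sum: "vcomp \<Delta> e (\<lambda>j. \<Sum>x\<in>A. f x j) = (\<lambda>j. \<Sum>x\<in>A. vcomp \<Delta> e (f x) j)"
  by (auto simp: vcomp_def fun_eq_iff fcomp_sum)

lemma iota_vec_vhom_times:
  assumes "vhom \<Delta> e v"
  shows "iota_vec \<Delta> (\<lambda>j. v j * c) j = iota_vec \<Delta> v j * iota_sh e c"
proof (cases "\<Delta> j \<le> e")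
  case True
  then have "fhom (e - \<Delta> j) (v j)" using assms by (auto simp: vhom_def)
  from iota_sh_fhom_times[OF this] True show ?thesis by (simp add: iota_vec_def)
next
  case False
  then have "v j = 0" using assms by (auto simp: vhom_def)
  then show ?thesis by (simp add: iota_vec_def)
qed

lemma sum_shift_if:
  fixes N a :: nat
  shows "(\<Sum>e<N. if a \<le> e then f (e - a) else 0) = (\<Sum>l<N - a. f l :: 'b::comm_monoid_add)"
proof (induction N)
  case (Suc N)
  show ?case
  proof (cases "a \<le> N")
    case True
    then have "Suc N - a = Suc (N - a)" by simp
    then show ?thesis using Suc True by simp
  next
    case False
    then have "Suc N - a = N - a" by simp
    then show ?thesis using Suc False by simp
  qed
qed simp

lemma ex_sum_vcomp_eq:
  "\<exists>N. \<forall>j\<in>{1..s}. (\<Sum>e<N. vcomp \<Delta> e v j) = v j"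
proof -
  define S where "S = (\<Union>j\<in>{1..s}. (\<lambda>w. \<Delta> j + length w) ` keys (v j))"
  have "finite S" unfolding S_def by auto
  define N where "N = Suc (Max (insert 0 S))"
  have N: "x < N" if "x \<in> S" for x
    using that \<open>finite S\<close> unfolding N_def by (simp add: le_imp_less_Suc)
  have "(\<Sum>e<N. vcomp \<Delta> e v j) = v j" if j: "j \<in> {1..s}" for j
  proof -
    have "(\<Sum>e<N. vcomp \<Delta> e v j) = (\<Sum>l<N - \<Delta> j. fcomp l (v j))"
      unfolding vcomp_def by (rule sum_shift_if)
    also have "\<dots> = v j"
    proof (rule sum_fcomp_eq, intro ballI)
      fix w assume "w \<in> keys (v j)"
      then have "\<Delta> j + length w \<in> S" using j unfolding S_def by auto
      then show "length w < N - \<Delta> j" using N by fastforce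
    qed
    finally show ?thesis .
  qed
  then show ?thesis by blast
qed

context graded_quotient
begin

lemma vequivA_vcomp:
  assumes "homA I s \<Delta> e v"
  shows "vequivA I s v (vcomp \<Delta> e v)"
proof -
  obtain w where w: "vequivA I s v w" "\<forall>j\<in>{1..s}. if \<Delta> j \<le> e then fhom (e - \<Delta> j) (w j) else w j = 0"
    using assms unfolding homA_def by blast
  show ?thesis unfolding vequivA_def
  proof
    fix j assume j: "j \<in> {1..s}"
    have d: "v j - w j \<in> I" using w(1) j by (simp add: vequivA_def)
    show "v j - vcomp \<Delta> e v j \<in> I"
    proof (cases "\<Delta> j \<le> e")
      case True
      have "fhom (e - \<Delta> j) (w j)" using w(2) j True by fastforce
      then have "fcomp (e - \<Delta> j) (w j) = w j" by (simp add: fhom_iff)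
      then have eq: "v j - fcomp (e - \<Delta> j) (v j) = (v j - w j) - fcomp (e - \<Delta> j) (v j - w j)"
        by (simp add: fcomp_diff)
      have "(v j - w j) - fcomp (e - \<Delta> j) (v j - w j) \<in> I"
        by (rule ideal_diff[OF d ideal_fcomp[OF d]])
      then have "v j - fcomp (e - \<Delta> j) (v j) \<in> I" by (subst eq)
      then show ?thesis using True by (simp add: vcomp_def)
    next
      case False
      then show ?thesis using w(2) j d by (simp add: vcomp_def)
    qed
  qed
qed

lemma homA_vhom: "vhom \<Delta> e v \<Longrightarrow> homA I s \<Delta> e v"
  unfolding homA_def vhom_def using vequivA_refl by blast

lemma homA_vcomp: "homA I s \<Delta> e (vcomp \<Delta> e v)"
  by (rule homA_vhom) (rule vhom_vcomp)

lemma vcomp_vequivA: "vequivA I s u v \<Longrightarrow> vequivA I s (vcomp \<Delta> e u) (vcomp \<Delta> e v)"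
  unfolding vequivA_def vcomp_def
  by (auto simp: fcomp_diff[symmetric] ideal_fcomp ideal_zero)

lemma homA_distinct_imp_zero:
  assumes "homA I s \<Delta> e v" "homA I s \<Delta> e' v" "e \<noteq> e'"
  shows "vequivA I s v (\<lambda>j. 0)"
proof -
  have "vequivA I s (vcomp \<Delta> e' v) (vcomp \<Delta> e' (vcomp \<Delta> e v))"
    by (rule vcomp_vequivA) (rule vequivA_vcomp[OF assms(1)])
  then have "vequivA I s (vcomp \<Delta> e' v) (\<lambda>j. 0)" using assms(3) by (simp add: vcomp_vcomp)
  then show ?thesis using vequivA_vcomp[OF assms(2)] vequivA_trans by blast
qed

lemma vcomp_times:
  assumes u: "homA I s \<Delta> eu u" and c: "c \<in> Fcar n"
  shows "vequivA I s (vcomp \<Delta> e (\<lambda>j. u j * c)) (\<lambda>j. u j * (if eu \<le> e then fcomp (e - eu) c else 0))"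
  unfolding vequivA_def
proof
  fix j assume j: "j \<in> {1..s}"
  define c' where "c' = (if eu \<le> e then fcomp (e - eu) c else 0)"
  have c': "c' \<in> Fcar n" using c by (simp add: c'_def Fcar_fcomp)
  let ?u = "vcomp \<Delta> eu u"
  have du: "u j - ?u j \<in> I" using vequivA_vcomp[OF u] j by (simp add: vequivA_def)
  have key: "vcomp \<Delta> e (\<lambda>j. ?u j * c) j = ?u j * c'"
  proof (cases "\<Delta> j \<le> eu")
    case True
    have hu: "fhom (eu - \<Delta> j) (?u j)" using True by (simp add: vcomp_def fhom_fcomp)
    show ?thesis
    proof (cases "eu \<le> e")
      case True
      then have "e - \<Delta> j = (eu - \<Delta> j) + (e - eu)" using \<open>\<Delta> j \<le> eu\<close> by simp
      then show ?thesis using fcomp_fhom_times[OF hu, of "e - eu" c] True \<open>\<Delta> j \<le> eu\<close>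
        by (simp add: vcomp_def c'_def)
    next
      case False
      then show ?thesis using fcomp_fhom_times_below[OF hu, of "e - \<Delta> j" c] \<open>\<Delta> j \<le> eu\<close>
        by (auto simp: vcomp_def c'_def)
    qed
  next
    case False
    then show ?thesis by (simp add: vcomp_def)
  qed
  have d1: "vcomp \<Delta> e (\<lambda>j. u j * c) j - vcomp \<Delta> e (\<lambda>j. ?u j * c) j \<in> I"
    using vcomp_vequivA[where u="\<lambda>j. u j * c" and v="\<lambda>j. ?u j * c" and e=e and \<Delta>=\<Delta> and s=s] vequivA_rmult[of s u ?u c] vequivA_vcomp[OF u] c j
    by (simp add: vequivA_def)
  have d2: "u j * c' - ?u j * c' \<in> I"
    using ideal_rmult[OF c' du] by (simp add: left_diff_distrib)
  have eq: "vcomp \<Delta> e (\<lambda>j. u j * c) j - u j * c' =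
     (vcomp \<Delta> e (\<lambda>j. u j * c) j - vcomp \<Delta> e (\<lambda>j. ?u j * c) j) - (u j * c' - ?u j * c')"
    using key by simp
  have "(vcomp \<Delta> e (\<lambda>j. u j * c) j - vcomp \<Delta> e (\<lambda>j. ?u j * c) j) - (u j * c' - ?u j * c') \<in> I"
    by (rule ideal_diff[OF d1 d2])
  then have "vcomp \<Delta> e (\<lambda>j. u j * c) j - u j * c' \<in> I" by (subst eq)
  then show "vcomp \<Delta> e (\<lambda>j. u j * c) j - u j * (if eu \<le> e then fcomp (e - eu) c else 0) \<in> I"
    by (simp only: c'_def)
qed

lemma iota_vec_vequivA: "vequivA I s u v \<Longrightarrow> vequivS n I s (iota_vec \<Delta> u) (iota_vec \<Delta> v)"
  unfolding vequivA_def vequivS_def iota_vec_def by (simp add: iota_sh_diff[symmetric] LPideal_iota_sh)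

end

lemma fhom_0_eq_single: assumes "fhom 0 p" shows "p = single [] (lookup p [])"
proof (rule poly_mapping_eqI)
  fix k :: "nat list"
  show "lookup p k = lookup (single [] (lookup p [])) k"
  proof (cases "k = []")
    case False
    then have "k \<notin> keys p" using assms by (auto simp: fhom_def)
    then show ?thesis using False by (simp add: lookup_single in_keys_iff)
  qed simp
qed

lemma finite_subset_chain_member:
  assumes "finite F" "F \<subseteq> \<Union>C" "chain\<^sub>\<subseteq> C" "T0 \<in> C"
  shows "\<exists>T\<in>C. F \<subseteq> T \<and> T0 \<subseteq> T"
  using assms
proof (induction F rule: finite_induct)
  case empty
  then show ?case by blast
next
  case (insert x F)
  then obtain T where T: "T \<in> C" "F \<subseteq> T" "T0 \<subseteq> T" by blast
  obtain T' where T': "T' \<in> C" "x \<in> T'" using insert by blast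
  from insert(5) T(1) T'(1) have "T \<subseteq> T' \<or> T' \<subseteq> T" unfolding chain_subset_def by blast
  then show ?case using T T' by blast
qed

context graded_quotient
begin

lemma vequivA_sum:
  "(\<And>x. x \<in> A \<Longrightarrow> vequivA I m (f x) (f' x)) \<Longrightarrow> vequivA I m (\<lambda>j. \<Sum>x\<in>A. f x j) (\<lambda>j. \<Sum>x\<in>A. f' x j)"
proof (induction A rule: infinite_finite_induct)
  case (insert x F)
  then have "vequivA I m (\<lambda>j. f x j + (\<Sum>x\<in>F. f x j)) (\<lambda>j. f' x j + (\<Sum>x\<in>F. f' x j))"
    by (intro vequivA_add) auto
  then show ?case using insert by simp
qed (simp_all add: vequivA_refl)

lemma vequivA_if_iota_vec_vequivS: "vequivS n I s (iota_vec \<Delta> u) (iota_vec \<Delta> v) \<Longrightarrow> vequivA I s u v"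
  unfolding vequivS_def vequivA_def iota_vec_def by (auto simp: iota_sh_diff[symmetric] intro: ideal_if_iota_sh_LPideal)

text \<open>The degree-\<open>e\<close> component of a combination of homogeneous generators \<open>u\<close> is obtained by
  replacing each coefficient by its component of degree \<open>e - deg u\<close>.\<close>

lemma rspanA_vcomp_homogeneous:
  assumes R: "rspanA n I s G v" and deg: "\<And>u. u \<in> G \<Longrightarrow> homA I s \<Delta> (deg u) u"
  shows "\<exists>gs as. length as = length gs \<and> set gs \<subseteq> G \<and> set as \<subseteq> Fcar n \<and>
     (\<forall>t<length gs. as ! t = 0 \<or> (deg (gs ! t) \<le> e \<and> fhom (e - deg (gs ! t)) (as ! t))) \<and>
     vequivA I s (vcomp \<Delta> e v) (\<lambda>j. \<Sum>t<length gs. (gs ! t) j * as ! t)"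
proof -
  obtain gs as where a: "length as = length gs" "set gs \<subseteq> G" "set as \<subseteq> Fcar n"
    "vequivA I s v (\<lambda>i. \<Sum>t<length gs. fmul ((gs ! t) i) (as ! t))"
    using R unfolding rspanA_def by blast
  define as' where "as' = map (\<lambda>t. if deg (gs ! t) \<le> e then fcomp (e - deg (gs ! t)) (as ! t) else 0) [0..<length gs]"
  have as'_length: "length as' = length gs" by (simp add: as'_def)
  have as'_nth: "t < length gs \<Longrightarrow> as' ! t = (if deg (gs ! t) \<le> e then fcomp (e - deg (gs ! t)) (as ! t) else 0)" for t
    by (simp add: as'_def)
  have as'_Fcar: "set as' \<subseteq> Fcar n"
  proof
    fix x assume "x \<in> set as'"
    then obtain t where t: "t < length gs" "x = as' ! t" using as'_length by (metis in_set_conv_nth)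
    have "as ! t \<in> Fcar n" using a(1,3) t(1) by (metis nth_mem subsetD)
    then show "x \<in> Fcar n" using t as'_nth by (simp add: Fcar_fcomp)
  qed
  have as'_hom: "\<forall>t<length gs. as' ! t = 0 \<or> (deg (gs ! t) \<le> e \<and> fhom (e - deg (gs ! t)) (as' ! t))"
    using as'_nth by (auto simp: fhom_fcomp)
  have "vequivA I s (vcomp \<Delta> e v) (vcomp \<Delta> e (\<lambda>i. \<Sum>t<length gs. (gs ! t) i * as ! t))"
    using vcomp_vequivA[OF a(4)] by (simp add: fmul_eq_times)
  also have "vcomp \<Delta> e (\<lambda>i. \<Sum>t<length gs. (gs ! t) i * as ! t) = (\<lambda>i. \<Sum>t<length gs. vcomp \<Delta> e (\<lambda>i. (gs ! t) i * as ! t) i)"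
    by (rule vcomp_sum)
  finally have components: "vequivA I s (vcomp \<Delta> e v) (\<lambda>i. \<Sum>t<length gs. vcomp \<Delta> e (\<lambda>i. (gs ! t) i * as ! t) i)" .
  have "vequivA I s (\<lambda>i. \<Sum>t<length gs. vcomp \<Delta> e (\<lambda>i. (gs ! t) i * as ! t) i) (\<lambda>i. \<Sum>t<length gs. (gs ! t) i * as' ! t)"
  proof (rule vequivA_sum)
    fix t assume "t \<in> {..<length gs}"
    then have t: "t < length gs" by simp
    have "gs ! t \<in> G" "as ! t \<in> Fcar n" using a(1-3) t by (metis nth_mem subsetD)+
    then show "vequivA I s (vcomp \<Delta> e (\<lambda>i. (gs ! t) i * as ! t)) (\<lambda>i. (gs ! t) i * as' ! t)"
      using vcomp_times[OF deg, of "gs ! t" "as ! t" e] as'_nth[OF t] by simp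
  qed
  with components have "vequivA I s (vcomp \<Delta> e v) (\<lambda>i. \<Sum>t<length gs. (gs ! t) i * as' ! t)" by (rule vequivA_trans)
  then show ?thesis using as'_length a(2) as'_Fcar as'_hom by (intro exI[where x=gs] exI[where x=as']) auto
qed

end

section \<open>Completing a minimal basis of low degree\<close>

context graded_quotient
begin

lemma rspanA_homogeneous_restrict:
  assumes x: "rspanA n I s G x" "homA I s \<Delta> e x"
    and deg: "\<And>u. u \<in> G \<Longrightarrow> homA I s \<Delta> (deg u) u"
    and G': "\<And>u. u \<in> G \<Longrightarrow> deg u \<le> e \<Longrightarrow> u \<in> G'"
  shows "rspanA n I s G' x"
proof -
  obtain gs as where a: "length as = length gs" "set gs \<subseteq> G" "set as \<subseteq> Fcar n"
      "\<forall>t<length gs. as ! t = 0 \<or> (deg (gs ! t) \<le> e \<and> fhom (e - deg (gs ! t)) (as ! t))"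
      "vequivA I s (vcomp \<Delta> e x) (\<lambda>j. \<Sum>t<length gs. (gs ! t) j * as ! t)"
    using rspanA_vcomp_homogeneous[OF x(1) deg] by blast
  have "rspanA n I s G' (\<lambda>j. \<Sum>t\<in>{..<length gs}. (gs ! t) j * as ! t)"
  proof (rule rspanA_sum)
    fix t assume t: "t \<in> {..<length gs}"
    then have "gs ! t \<in> G" "as ! t \<in> Fcar n" using a(1-3) nth_mem by fastforce+
    then show "rspanA n I s G' (\<lambda>j. (gs ! t) j * as ! t)"
      using a(4) t G' by (cases "as ! t = 0") (auto simp: rspanA_zero intro: rspanA_gen)
  qed
  then show ?thesis
    using rspanA_vequivA vequivA_trans[OF vequivA_vcomp[OF x(2)] a(5)] by blast
qed

lemma rspanA_homogeneous_split_off: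
  assumes L: "\<And>u. u \<in> L \<Longrightarrow> \<exists>e'<e. homA I s \<Delta> e' u"
    and G: "\<And>u. u \<in> G \<Longrightarrow> homA I s \<Delta> e u"
    and v: "homA I s \<Delta> e v" "v \<notin> L"
    and x: "homA I s \<Delta> e x" "rspanA n I s (L \<union> insert v G) x"
  obtains c rest where "rspanA n I s (L \<union> G) rest"
    "vequivA I s x (\<lambda>j. v j * single [] c + rest j)"
proof -
  define deg where "deg u = (if u \<in> L then (SOME e'. e' < e \<and> homA I s \<Delta> e' u) else e)" for u
  have deg: "homA I s \<Delta> (deg u) u" if "u \<in> L \<union> insert v G" for u
  proof (cases "u \<in> L")
    case True
    then show ?thesis using someI_ex[OF L[OF True]] by (simp add: deg_def)
  next
    case False
    then show ?thesis using that v(1) G by (auto simp: deg_def)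
  qed
  obtain gs as where a: "length as = length gs" "set gs \<subseteq> L \<union> insert v G" "set as \<subseteq> Fcar n"
      "\<forall>t<length gs. as ! t = 0 \<or> (deg (gs ! t) \<le> e \<and> fhom (e - deg (gs ! t)) (as ! t))"
      "vequivA I s (vcomp \<Delta> e x) (\<lambda>j. \<Sum>t<length gs. (gs ! t) j * as ! t)"
    using rspanA_vcomp_homogeneous[OF x(2) deg] by blast
  define lam where "lam = (\<Sum>t<length gs. if gs ! t = v then as ! t else 0)"
  define rest where "rest = (\<lambda>j. \<Sum>t<length gs. if gs ! t = v then 0 else (gs ! t) j * as ! t)"
  have split: "(\<Sum>t<length gs. (gs ! t) j * as ! t) = v j * lam + rest j" for j
    unfolding lam_def rest_def sum_distrib_left sum.distrib[symmetric] by (rule sum.cong) auto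
  have "rspanA n I s (L \<union> G) rest"
    unfolding rest_def
  proof (rule rspanA_sum)
    fix t assume t: "t \<in> {..<length gs}"
    then have "gs ! t \<in> L \<union> insert v G" "as ! t \<in> Fcar n" using a(1-3) nth_mem by fastforce+
    then show "rspanA n I s (L \<union> G) (\<lambda>j. if gs ! t = v then 0 else (gs ! t) j * as ! t)"
      by (cases "gs ! t = v") (auto simp: rspanA_zero intro: rspanA_gen)
  qed
  moreover have "fhom 0 lam"
    unfolding lam_def fhom_iff fcomp_sum
    using a(4) v(2) by (intro sum.cong) (auto simp: fhom_iff deg_def)
  then obtain c where "lam = single [] c" using fhom_0_eq_single by blast
  moreover have "vequivA I s x (\<lambda>j. v j * lam + rest j)"
    using vequivA_trans[OF vequivA_vcomp[OF x(1)] a(5)] by (simp add: split)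
  ultimately show ?thesis using that by blast
qed

lemma rspanA_homogeneous_exchange:
  assumes L: "\<And>u. u \<in> L \<Longrightarrow> \<exists>e'<e. homA I s \<Delta> e' u"
    and G: "\<And>u. u \<in> G \<Longrightarrow> homA I s \<Delta> e u"
    and v: "homA I s \<Delta> e v"
    and x: "homA I s \<Delta> e x" "rspanA n I s (L \<union> insert v G) x"
  shows "rspanA n I s (L \<union> G) x \<or> rspanA n I s (L \<union> insert x G) v"
proof (cases "v \<in> L")
  case True
  then show ?thesis by (simp add: rspanA_base)
next
  case False
  obtain c rest where rest: "rspanA n I s (L \<union> G) rest"
      and x_eq: "vequivA I s x (\<lambda>j. v j * single [] c + rest j)"
    using rspanA_homogeneous_split_off[OF L G v False x] by blast
  show ?thesis
  proof (cases "c = 0")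
    case True
    then show ?thesis using x_eq rest rspanA_vequivA by auto
  next
    case False
    have "vequivA I s (\<lambda>j. x j - rest j) (\<lambda>j. v j * single [] c)"
      using x_eq by (simp add: vequivA_def algebra_simps)
    then have "vequivA I s (\<lambda>j. (x j - rest j) * single [] (inverse c))
        (\<lambda>j. v j * single [] c * single [] (inverse c))"
      by (rule vequivA_rmult) (simp add: Fcar_single)
    moreover have "v j * single [] c * single [] (inverse c) = v j" for j
      using False by (simp add: mult.assoc single_times_single times_single_Nil_one)
    ultimately have v_eq: "vequivA I s v (\<lambda>j. (x j - rest j) * single [] (inverse c))"
      using vequivA_sym by simp
    have "rspanA n I s (L \<union> insert x G) x" by (simp add: rspanA_base)
    moreover have "rspanA n I s (L \<union> insert x G) rest" by (rule rspanA_mono[OF rest]) blast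
    ultimately have "rspanA n I s (L \<union> insert x G) (\<lambda>j. x j - rest j)" by (rule rspanA_diff)
    then have "rspanA n I s (L \<union> insert x G) (\<lambda>j. (x j - rest j) * single [] (inverse c))"
      by (rule rspanA_rmult) (simp add: Fcar_single)
    then show ?thesis using v_eq rspanA_vequivA by blast
  qed
qed

end

locale graded_syzygies = graded_quotient n I
  for n :: nat and I :: "'k::field fpoly set" +
  fixes r s :: nat and g :: "nat \<Rightarrow> nat \<Rightarrow> 'k fpoly" and \<Delta> :: "nat \<Rightarrow> nat"
  assumes g_hom: "\<forall>j\<in>{1..s}. \<exists>w. vequivA I r (g j) w \<and> (\<forall>i\<in>{1..r}. fhom (\<Delta> j) (w i))"
begin

lemma g_minus_fcomp_ideal:
  assumes j: "j \<in> {1..s}" and i: "i \<in> {1..r}"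
  shows "g j i - fcomp (\<Delta> j) (g j i) \<in> I"
proof -
  obtain w where w: "vequivA I r (g j) w" "\<forall>i\<in>{1..r}. fhom (\<Delta> j) (w i)" using g_hom j by blast
  then have d: "g j i - w i \<in> I" "fcomp (\<Delta> j) (w i) = w i" using i by (auto simp: vequivA_def fhom_iff)
  have eq: "g j i - fcomp (\<Delta> j) (g j i) = (g j i - w i) - fcomp (\<Delta> j) (g j i - w i)"
    using d(2) by (simp add: fcomp_diff)
  show ?thesis by (subst eq) (rule ideal_diff[OF d(1) ideal_fcomp[OF d(1)]])
qed

lemma sum_g_minus_fcomp_times_ideal:
  assumes "\<forall>j\<in>{1..s}. w j \<in> Fcar n" and "i \<in> {1..r}"
  shows "(\<Sum>j=1..s. (g j i - fcomp (\<Delta> j) (g j i)) * w j) \<in> I"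
  using assms g_minus_fcomp_ideal by (auto intro!: ideal_sum ideal_rmult)

lemma syzA_vcomp:
  assumes v: "syzA n I r s g v"
  shows "syzA n I r s g (vcomp \<Delta> e v)"
proof -
  have vF: "\<forall>j\<in>{1..s}. v j \<in> Fcar n" using v by (simp add: syzA_def)
  have tF: "\<forall>j\<in>{1..s}. vcomp \<Delta> e v j \<in> Fcar n"
    using vF by (simp add: vcomp_def Fcar_fcomp)
  have "(\<Sum>j=1..s. g j i * vcomp \<Delta> e v j) \<in> I" if i: "i \<in> {1..r}" for i
  proof -
    let ?gh = "\<lambda>j. fcomp (\<Delta> j) (g j i)"
    have "(\<Sum>j=1..s. g j i * v j) \<in> I" using v i by (simp add: syzA_def fmul_eq_times)
    then have "(\<Sum>j=1..s. g j i * v j) - (\<Sum>j=1..s. (g j i - ?gh j) * v j) \<in> I"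
      using ideal_diff sum_g_minus_fcomp_times_ideal[OF vF i] by blast
    then have "(\<Sum>j=1..s. ?gh j * v j) \<in> I"
      by (simp add: sum_subtractf left_diff_distrib)
    moreover have "fcomp e (?gh j * v j) = ?gh j * vcomp \<Delta> e v j" for j
    proof (cases "\<Delta> j \<le> e")
      case True
      have "fcomp (\<Delta> j + (e - \<Delta> j)) (?gh j * v j) = ?gh j * fcomp (e - \<Delta> j) (v j)"
        by (rule fcomp_fhom_times[OF fhom_fcomp])
      then show ?thesis using True by (simp add: vcomp_def)
    next
      case False
      then show ?thesis using fcomp_fhom_times_below[OF fhom_fcomp, of e "\<Delta> j"] by (simp add: vcomp_def)
    qed
    ultimately have "(\<Sum>j=1..s. ?gh j * vcomp \<Delta> e v j) \<in> I"
      using ideal_fcomp[where p="\<Sum>j=1..s. ?gh j * v j" and e=e] by (simp add: fcomp_sum)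
    then have "(\<Sum>j=1..s. ?gh j * vcomp \<Delta> e v j) + (\<Sum>j=1..s. (g j i - ?gh j) * vcomp \<Delta> e v j) \<in> I"
      using ideal_add sum_g_minus_fcomp_times_ideal[OF tF i] by blast
    then show ?thesis by (simp add: sum.distrib[symmetric] left_diff_distrib)
  qed
  then show ?thesis using tF by (simp add: syzA_def fmul_eq_times)
qed

definition syz_deg :: "nat \<Rightarrow> (nat \<Rightarrow> 'k fpoly) set" where
  "syz_deg e = {v. syzA n I r s g v \<and> homA I s \<Delta> e v}"

definition syz_below :: "nat \<Rightarrow> (nat \<Rightarrow> 'k fpoly) set" where
  "syz_below e = {u. syzA n I r s g u \<and> (\<exists>e'<e. homA I s \<Delta> e' u)}"

definition indep_mod_below :: "nat \<Rightarrow> (nat \<Rightarrow> 'k fpoly) set \<Rightarrow> bool" where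
  "indep_mod_below e T \<longleftrightarrow> T \<subseteq> syz_deg e \<and>
     (\<forall>x\<in>T. \<not> rspanA n I s (syz_below e \<union> {w\<in>T. \<not> vequivA I s w x}) x)"

definition max_indep :: "nat \<Rightarrow> (nat \<Rightarrow> 'k fpoly) set" where
  "max_indep e = (SOME T. indep_mod_below e T \<and> (\<forall>T'. indep_mod_below e T' \<and> T \<subseteq> T' \<longrightarrow> T' = T))"

lemma indep_mod_below_Union_chain:
  assumes C: "C \<in> chains {T. indep_mod_below e T}"
  shows "indep_mod_below e (\<Union>C)"
  unfolding indep_mod_below_def
proof (intro conjI ballI notI)
  have CA: "\<And>T. T \<in> C \<Longrightarrow> indep_mod_below e T" and ch: "chain\<^sub>\<subseteq> C"
    using C unfolding chains_def by auto
  then show "\<Union>C \<subseteq> syz_deg e" unfolding indep_mod_below_def by blast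
  fix x assume "x \<in> \<Union>C"
  then obtain T0 where T0: "T0 \<in> C" "x \<in> T0" by blast
  assume "rspanA n I s (syz_below e \<union> {w \<in> \<Union>C. \<not> vequivA I s w x}) x"
  then obtain gs as where a: "length as = length gs" "set gs \<subseteq> syz_below e \<union> {w \<in> \<Union>C. \<not> vequivA I s w x}"
      "set as \<subseteq> Fcar n" "vequivA I s x (\<lambda>i. sum_list (map2 (\<lambda>g a. g i * a) gs as))"
    unfolding rspanA_iff_sum_list by blast
  obtain T where T: "T \<in> C" "set gs \<inter> \<Union>C \<subseteq> T" "T0 \<subseteq> T"
    using finite_subset_chain_member[of "set gs \<inter> \<Union>C" C T0] ch T0(1) by blast
  then have "rspanA n I s (syz_below e \<union> {w \<in> T. \<not> vequivA I s w x}) x"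
    using a unfolding rspanA_iff_sum_list by (intro exI[of _ gs] exI[of _ as]) blast
  with CA[OF T(1)] T(3) T0(2) show False unfolding indep_mod_below_def by blast
qed

lemma ex_maximal_indep_mod_below:
  "\<exists>T. indep_mod_below e T \<and> (\<forall>T'. indep_mod_below e T' \<and> T \<subseteq> T' \<longrightarrow> T' = T)"
proof -
  have "\<exists>M\<in>{T. indep_mod_below e T}. \<forall>X\<in>{T. indep_mod_below e T}. M \<subseteq> X \<longrightarrow> X = M"
    by (rule Zorn_Lemma2) (use indep_mod_below_Union_chain in blast)
  then show ?thesis by blast
qed

lemma indep_mod_below_max_indep: "indep_mod_below e (max_indep e)"
  and max_indep_maximal: "indep_mod_below e T' \<Longrightarrow> max_indep e \<subseteq> T' \<Longrightarrow> T' = max_indep e"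
  using someI_ex[OF ex_maximal_indep_mod_below] unfolding max_indep_def by blast+

lemma max_indep_syz_deg: "max_indep e \<subseteq> syz_deg e"
  using indep_mod_below_max_indep unfolding indep_mod_below_def by blast

lemma max_indep_nonzero: "x \<in> max_indep e \<Longrightarrow> \<not> vequivA I s x (\<lambda>j. 0)"
  using indep_mod_below_max_indep rspanA_vequivA[OF rspanA_zero] unfolding indep_mod_below_def by blast

lemma indep_mod_below_insert:
  assumes T: "indep_mod_below e T" and v: "v \<in> syz_deg e"
    and nv: "\<not> rspanA n I s (syz_below e \<union> T) v"
  shows "indep_mod_below e (insert v T)"
  unfolding indep_mod_below_def
proof (intro conjI ballI notI)
  let ?L = "syz_below e"
  have L: "\<exists>e'<e. homA I s \<Delta> e' u" if "u \<in> ?L" for u using that by (simp add: syz_below_def)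
  have T_hom: "homA I s \<Delta> e u" if "u \<in> T" for u using that T by (auto simp: indep_mod_below_def syz_deg_def)
  have v_hom: "homA I s \<Delta> e v" using v by (simp add: syz_deg_def)
  show "insert v T \<subseteq> syz_deg e" using v T by (simp add: indep_mod_below_def)
  fix x assume x: "x \<in> insert v T"
    and R: "rspanA n I s (?L \<union> {w \<in> insert v T. \<not> vequivA I s w x}) x"
  show False
  proof (cases "x = v")
    case True
    then have "rspanA n I s (?L \<union> T) v"
      using rspanA_mono[OF R] vequivA_refl[of s v] by blast
    with nv show False ..
  next
    case False
    then have xT: "x \<in> T" using x by simp
    show False
    proof (cases "vequivA I s v x")
      case True
      then show False using nv rspanA_vequivA rspanA_base[where u=x and G="?L \<union> T"] xT by blast
    next
      case False
      let ?G = "{w \<in> T. \<not> vequivA I s w x}"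
      have "{w \<in> insert v T. \<not> vequivA I s w x} = insert v ?G" using False by auto
      with R have "rspanA n I s (?L \<union> insert v ?G) x" by simp
      then have "rspanA n I s (?L \<union> ?G) x \<or> rspanA n I s (?L \<union> insert x ?G) v"
        by (intro rspanA_homogeneous_exchange[where e=e]) (use L T_hom xT v_hom in auto)
      moreover have "\<not> rspanA n I s (?L \<union> ?G) x"
        using T xT unfolding indep_mod_below_def by blast
      moreover have "?L \<union> insert x ?G \<subseteq> ?L \<union> T" using xT by blast
      ultimately show False using nv rspanA_mono by blast
    qed
  qed
qed

lemma syz_deg_in_span_max_indep:
  assumes v: "v \<in> syz_deg e"
  shows "rspanA n I s (syz_below e \<union> max_indep e) v"
proof (rule ccontr)
  assume nv: "\<not> rspanA n I s (syz_below e \<union> max_indep e) v"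
  then have "insert v (max_indep e) = max_indep e"
    using indep_mod_below_insert[OF indep_mod_below_max_indep v] max_indep_maximal by blast
  moreover have "v \<notin> max_indep e"
    using nv rspanA_base[where u=v and G="syz_below e \<union> max_indep e"] by blast
  ultimately show False by blast
qed

end

locale low_degree_basis = graded_syzygies n I r s g \<Delta>
  for n :: nat and I :: "'k::field fpoly set" and r s g \<Delta> +
  fixes d :: nat and H0 :: "(nat \<Rightarrow> 'k fpoly) set"
  assumes H0_syz: "\<And>u. u \<in> H0 \<Longrightarrow> syzA n I r s g u"
    and H0_deg: "\<And>u. u \<in> H0 \<Longrightarrow> \<exists>e\<le>d. homA I s \<Delta> e u"
    and H0_span: "\<And>v e. syzA n I r s g v \<Longrightarrow> homA I s \<Delta> e v \<Longrightarrow> e \<le> d \<Longrightarrow> rspanA n I s H0 v"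
    and H0_min: "\<And>u. u \<in> H0 \<Longrightarrow> \<not> rspanA n I s {w\<in>H0. \<not> vequivA I s w u} u"
begin

definition extended_basis :: "(nat \<Rightarrow> 'k fpoly) set" where
  "extended_basis = H0 \<union> (\<Union>e\<in>{d<..}. max_indep e)"

lemma syz_deg_in_span_extended_basis:
  "v \<in> syz_deg e \<Longrightarrow> rspanA n I s extended_basis v"
proof (induction e arbitrary: v rule: less_induct)
  case (less e)
  show ?case
  proof (cases "e \<le> d")
    case True
    have "syzA n I r s g v" "homA I s \<Delta> e v" using less.prems by (simp_all add: syz_deg_def)
    from this True have "rspanA n I s H0 v" by (rule H0_span)
    then show ?thesis by (rule rspanA_mono) (simp add: extended_basis_def)
  next
    case False
    show ?thesis
    proof (rule rspanA_trans[OF syz_deg_in_span_max_indep[OF less.prems]])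
      fix u assume "u \<in> syz_below e \<union> max_indep e"
      then show "rspanA n I s extended_basis u"
      proof
        assume "u \<in> syz_below e"
        then obtain e' where "e' < e" "u \<in> syz_deg e'" by (auto simp: syz_below_def syz_deg_def)
        then show ?thesis by (rule less.IH)
      next
        assume "u \<in> max_indep e"
        then show ?thesis using False by (intro rspanA_base) (auto simp: extended_basis_def)
      qed
    qed
  qed
qed

lemma syzA_in_span_extended_basis:
  assumes v: "syzA n I r s g v"
  shows "rspanA n I s extended_basis v"
proof -
  obtain N where N: "\<forall>j\<in>{1..s}. (\<Sum>e<N. vcomp \<Delta> e v j) = v j" using ex_sum_vcomp_eq by blast
  have "rspanA n I s extended_basis (\<lambda>j. \<Sum>e\<in>{..<N}. vcomp \<Delta> e v j)"
  proof (rule rspanA_sum)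
    fix e
    show "rspanA n I s extended_basis (vcomp \<Delta> e v)"
      by (rule syz_deg_in_span_extended_basis) (use syzA_vcomp[OF v] homA_vcomp in \<open>auto simp: syz_deg_def\<close>)
  qed
  moreover have "vequivA I s v (\<lambda>j. \<Sum>e\<in>{..<N}. vcomp \<Delta> e v j)"
    using N by (simp add: vequivA_def)
  ultimately show ?thesis using rspanA_vequivA by blast
qed

lemma extended_basis_syzA: "u \<in> extended_basis \<Longrightarrow> syzA n I r s g u"
  using H0_syz max_indep_syz_deg by (auto simp: extended_basis_def syz_deg_def)

lemma extended_basis_degree:
  obtains deg where "\<And>u. u \<in> extended_basis \<Longrightarrow> homA I s \<Delta> (deg u) u"
    and "\<And>u. u \<in> H0 \<Longrightarrow> deg u \<le> d"
    and "\<And>u. u \<in> extended_basis \<Longrightarrow> u \<notin> H0 \<Longrightarrow> d < deg u \<and> u \<in> max_indep (deg u)"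
proof -
  have "\<forall>u\<in>extended_basis. \<exists>e. homA I s \<Delta> e u \<and> (u \<in> H0 \<longrightarrow> e \<le> d) \<and>
      (u \<notin> H0 \<longrightarrow> d < e \<and> u \<in> max_indep e)"
  proof
    fix u assume "u \<in> extended_basis"
    then consider "u \<in> H0" | e where "d < e" "u \<in> max_indep e" "u \<notin> H0"
      by (auto simp: extended_basis_def)
    then show "\<exists>e. homA I s \<Delta> e u \<and> (u \<in> H0 \<longrightarrow> e \<le> d) \<and> (u \<notin> H0 \<longrightarrow> d < e \<and> u \<in> max_indep e)"
    proof cases
      case 1
      then show ?thesis using H0_deg by blast
    next
      case 2
      then show ?thesis using max_indep_syz_deg by (auto simp: syz_deg_def)
    qed
  qed
  from bchoice[OF this] obtain deg where deg: "\<forall>u\<in>extended_basis. homA I s \<Delta> (deg u) u \<and>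
      (u \<in> H0 \<longrightarrow> deg u \<le> d) \<and> (u \<notin> H0 \<longrightarrow> d < deg u \<and> u \<in> max_indep (deg u))" ..
  show ?thesis
  proof (rule that)
    show "u \<in> H0 \<Longrightarrow> deg u \<le> d" for u using deg by (simp add: extended_basis_def)
  qed (use deg in simp_all)
qed

lemma extended_basis_low_degree:
  assumes "v \<in> extended_basis" "homA I s \<Delta> e v" "e \<le> d"
  shows "v \<in> H0"
proof (rule ccontr)
  assume "v \<notin> H0"
  then obtain e' where "d < e'" "v \<in> max_indep e'" using assms(1) by (auto simp: extended_basis_def)
  moreover from this have "homA I s \<Delta> e' v" using max_indep_syz_deg by (auto simp: syz_deg_def)
  then have "vequivA I s v (\<lambda>j. 0)"
    by (rule homA_distinct_imp_zero[OF assms(2)]) (use assms(3) \<open>d < e'\<close> in simp)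
  ultimately show False using max_indep_nonzero by blast
qed

lemma extended_basis_minimal:
  assumes x: "x \<in> extended_basis"
  shows "\<not> rspanA n I s {w \<in> extended_basis. \<not> vequivA I s w x} x"
proof
  let ?E = "extended_basis"
  obtain deg where deg: "\<And>u. u \<in> ?E \<Longrightarrow> homA I s \<Delta> (deg u) u" "\<And>u. u \<in> H0 \<Longrightarrow> deg u \<le> d"
      "\<And>u. u \<in> ?E \<Longrightarrow> u \<notin> H0 \<Longrightarrow> d < deg u \<and> u \<in> max_indep (deg u)"
    using extended_basis_degree by metis
  assume R: "rspanA n I s {w \<in> ?E. \<not> vequivA I s w x} x"
  have deg_R: "homA I s \<Delta> (deg u) u" if "u \<in> {w \<in> ?E. \<not> vequivA I s w x}" for u
    using deg(1) that by blast
  show False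
  proof (cases "x \<in> H0")
    case True
    have "rspanA n I s {w \<in> H0. \<not> vequivA I s w x} x"
    proof (rule rspanA_homogeneous_restrict[OF R deg(1)[OF x] deg_R])
      fix u assume "u \<in> {w \<in> ?E. \<not> vequivA I s w x}" "deg u \<le> deg x"
      then show "u \<in> {w \<in> H0. \<not> vequivA I s w x}" using deg(2)[OF True] deg(3) by force
    qed
    then show False using H0_min True by blast
  next
    case False
    let ?e = "deg x"
    have e: "d < ?e" "x \<in> max_indep ?e" using deg(3) x False by auto
    have "rspanA n I s (syz_below ?e \<union> {w \<in> max_indep ?e. \<not> vequivA I s w x}) x"
    proof (rule rspanA_homogeneous_restrict[OF R deg(1)[OF x] deg_R])
      fix u assume u: "u \<in> {w \<in> ?E. \<not> vequivA I s w x}" "deg u \<le> ?e"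
      show "u \<in> syz_below ?e \<union> {w \<in> max_indep ?e. \<not> vequivA I s w x}"
      proof (cases "deg u < ?e")
        case True
        then show ?thesis using u deg(1) extended_basis_syzA by (auto simp: syz_below_def)
      next
        case False
        then have "u \<notin> H0" using deg(2) e(1) by fastforce
        then have "u \<in> max_indep (deg u)" using deg(3) u(1) by blast
        moreover have "deg u = ?e" using u(2) False by simp
        ultimately show ?thesis using u(1) by simp
      qed
    qed
    then show False using indep_mod_below_max_indep[of ?e] e(2) by (auto simp: indep_mod_below_def)
  qed
qed

theorem minbasis_syzA_extended_basis: "minbasis_syzA n I r s \<Delta> g extended_basis"
proof -
  obtain deg where deg: "\<And>u. u \<in> extended_basis \<Longrightarrow> homA I s \<Delta> (deg u) u"
    using extended_basis_degree by metis
  show ?thesis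
    unfolding minbasis_syzA_def
    using extended_basis_syzA deg syzA_in_span_extended_basis extended_basis_minimal by blast
qed

end

section \<open>The letterplace correspondence for syzygies\<close>

context graded_quotient
begin

lemma ideal_if_fcomp_ideal:
  assumes "\<And>l. fcomp l f \<in> I"
  shows "f \<in> I"
proof -
  obtain N where "(\<Sum>l<N. fcomp l f) = f" using ex_sum_fcomp_eq by blast
  then show ?thesis using ideal_sum assms by metis
qed

lemma diff_fcomp_ideal_if_fcomp_ideal:
  assumes "\<And>l'. l' \<noteq> l \<Longrightarrow> fcomp l' f \<in> I"
  shows "f - fcomp l f \<in> I"
  by (rule ideal_if_fcomp_ideal) (use assms in \<open>simp add: fcomp_diff fcomp_fcomp\<close>)

lemma homA_if_homS_iota_vec:
  assumes "homS n I s \<Delta> e (iota_vec \<Delta> u)"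
  shows "homA I s \<Delta> e u"
proof -
  obtain w where w: "vequivS n I s (iota_vec \<Delta> u) w"
      "\<forall>j\<in>{1..s}. if \<Delta> j \<le> e then phom (e - \<Delta> j) (w j) else w j = 0"
    using assms unfolding homS_def by blast
  have other: "fcomp l (u j) \<in> I" if j: "j \<in> {1..s}" and l: "\<not> (\<Delta> j \<le> e \<and> l = e - \<Delta> j)" for j l
  proof -
    have "phi (\<Delta> j) l (iota_sh (\<Delta> j) (u j) - w j) \<in> I"
      using w(1) j by (intro phi_LPideal) (simp add: vequivS_def iota_vec_def)
    moreover have "phi (\<Delta> j) l (w j) = 0"
    proof (cases "\<Delta> j \<le> e")
      case True
      then show ?thesis using w(2) j l by (intro phi_phom_other[of "e - \<Delta> j"]) auto
    next
      case False
      then show ?thesis using w(2) j by simp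
    qed
    ultimately show ?thesis by (simp add: phi_diff phi_iota_sh)
  qed
  have "u j - vcomp \<Delta> e u j \<in> I" if j: "j \<in> {1..s}" for j
  proof (cases "\<Delta> j \<le> e")
    case True
    then show ?thesis using other[OF j] by (simp add: vcomp_def diff_fcomp_ideal_if_fcomp_ideal)
  next
    case False
    then show ?thesis using other[OF j] by (simp add: vcomp_def ideal_if_fcomp_ideal)
  qed
  then show ?thesis
    unfolding homA_def using vhom_vcomp[of \<Delta> e u] by (intro exI[of _ "vcomp \<Delta> e u"]) (auto simp: vequivA_def vhom_def)
qed

lemma vcomp_zero_if_Pdcar:
  assumes w: "vequivS n I s (iota_vec \<Delta> u) w" "\<forall>j\<in>{1..s}. w j \<in> Pdcar n d"
    and \<Delta>: "\<forall>j\<in>{1..s}. \<Delta> j \<le> d" and "d < e"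
  shows "vequivA I s (vcomp \<Delta> e u) (\<lambda>j. 0)"
  unfolding vequivA_def
proof
  fix j assume j: "j \<in> {1..s}"
  then have "\<Delta> j < e" using \<Delta> \<open>d < e\<close> by fastforce
  have "phi (\<Delta> j) (e - \<Delta> j) (iota_sh (\<Delta> j) (u j) - w j) \<in> I"
    using w(1) j by (intro phi_LPideal) (simp add: vequivS_def iota_vec_def)
  moreover have "phi (\<Delta> j) (e - \<Delta> j) (w j) = 0"
    using w(2) j \<open>d < e\<close> \<open>\<Delta> j < e\<close> by (intro phi_Pdcar_beyond[of _ n d]) auto
  ultimately show "vcomp \<Delta> e u j - 0 \<in> I"
    using \<open>\<Delta> j < e\<close> by (simp add: phi_diff phi_iota_sh vcomp_def)
qed

end

lemma phi_Bset_times: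
  assumes "b \<in> Bset n s \<Delta>"
  shows "phi (\<Delta> j) l (b j * a) = 0"
  using assms phi_X_times[of _ "\<Delta> j"] unfolding Bset_def by auto

lemma iota_vec_zero: "iota_vec \<Delta> (\<lambda>j. 0) = (\<lambda>j. 0)"
  by (simp add: iota_vec_def)

locale letterplace_minbasis = graded_syzygies n I r s g \<Delta>
  for n :: nat and I :: "'k::field fpoly set" and r s g \<Delta> +
  fixes d :: nat and Kidx :: "'i set" and hp :: "'i \<Rightarrow> nat \<Rightarrow> 'k cpoly" and h :: "'i \<Rightarrow> nat \<Rightarrow> 'k fpoly"
  assumes g_car: "\<forall>j\<in>{1..s}. \<forall>i\<in>{1..r}. g j i \<in> Fcar n"
    and g_deg: "\<forall>j\<in>{1..s}. \<Delta> j \<le> d"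
    and basis: "minbasis_syzSd n I d r s \<Delta> g (Bset n s \<Delta> \<union> hp ` Kidx)"
    and h_car: "\<forall>k\<in>Kidx. \<forall>j\<in>{1..s}. h k j \<in> Fcar n"
    and h_pre: "\<forall>k\<in>Kidx. vequivS n I s (hp k) (\<lambda>j. iota_sh (\<Delta> j) (h k j))"
begin

lemma basis_syzSd: "x \<in> Bset n s \<Delta> \<union> hp ` Kidx \<Longrightarrow> syzSd n I d r s g x"
  and basis_homS: "x \<in> Bset n s \<Delta> \<union> hp ` Kidx \<Longrightarrow> \<exists>e. homS n I s \<Delta> e x"
  and basis_spans: "syzSd n I d r s g v \<Longrightarrow> spanSd n I d s (Bset n s \<Delta> \<union> hp ` Kidx) v"
  and basis_minimal: "x \<in> Bset n s \<Delta> \<union> hp ` Kidx \<Longrightarrow>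
     \<not> spanSd n I d s {w \<in> Bset n s \<Delta> \<union> hp ` Kidx. \<not> vequivS n I s w x} x"
  using basis unfolding minbasis_syzSd_def by blast+

lemma syzA_iff_letterplace:
  assumes v: "\<forall>j\<in>{1..s}. v j \<in> Fcar n" and i: "i \<in> {1..r}"
  shows "(\<Sum>j=1..s. g j i * v j) \<in> I \<longleftrightarrow> (\<Sum>j=1..s. iota_sh 0 (g j i) * iota_vec \<Delta> v j) \<in> LPideal n I"
proof -
  let ?X = "\<Sum>j=1..s. fcomp (\<Delta> j) (g j i) * v j"
  have A: "(\<Sum>j=1..s. g j i * v j) - ?X \<in> I"
    using sum_g_minus_fcomp_times_ideal[OF v i] by (simp add: sum_subtractf left_diff_distrib)
  have B: "iota_sh 0 ?X = (\<Sum>j=1..s. iota_sh 0 (fcomp (\<Delta> j) (g j i)) * iota_vec \<Delta> v j)"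
    by (simp add: iota_sh_sum iota_sh_fhom_times[OF fhom_fcomp] iota_vec_def)
  have C: "(\<Sum>j=1..s. iota_sh 0 (g j i) * iota_vec \<Delta> v j) - iota_sh 0 ?X \<in> LPideal n I"
  proof -
    have "(\<Sum>j=1..s. iota_sh 0 (g j i) * iota_vec \<Delta> v j) - iota_sh 0 ?X =
       (\<Sum>j=1..s. iota_sh 0 (g j i - fcomp (\<Delta> j) (g j i)) * iota_vec \<Delta> v j)"
      unfolding B by (simp add: sum_subtractf left_diff_distrib iota_sh_diff)
    also have "\<dots> \<in> LPideal n I"
    proof (rule LPideal_sum)
      fix j assume j: "j \<in> {1..s}"
      show "iota_sh 0 (g j i - fcomp (\<Delta> j) (g j i)) * iota_vec \<Delta> v j \<in> LPideal n I"
        by (rule LPideal_rmult)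
          (use v j g_minus_fcomp_ideal[OF j i] in \<open>auto simp: iota_vec_def intro: Pcar_iota_sh LPideal_iota_sh\<close>)
    qed
    finally show ?thesis .
  qed
  show ?thesis
  proof
    assume "(\<Sum>j=1..s. g j i * v j) \<in> I"
    then have "?X \<in> I" using ideal_diff[OF _ A] by fastforce
    then have "iota_sh 0 ?X \<in> LPideal n I" by (rule LPideal_iota_sh)
    then show "(\<Sum>j=1..s. iota_sh 0 (g j i) * iota_vec \<Delta> v j) \<in> LPideal n I"
      using LPideal_add[OF C] by fastforce
  next
    assume "(\<Sum>j=1..s. iota_sh 0 (g j i) * iota_vec \<Delta> v j) \<in> LPideal n I"
    then have "iota_sh 0 ?X \<in> LPideal n I" using LPideal_diff[OF _ C] by fastforce
    then have "?X \<in> I" by (rule ideal_if_iota_sh_LPideal)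
    then show "(\<Sum>j=1..s. g j i * v j) \<in> I" using ideal_add[OF A] by fastforce
  qed
qed

lemma hp_vequivS_iota_vec: "k \<in> Kidx \<Longrightarrow> vequivS n I s (hp k) (iota_vec \<Delta> (h k))"
  using h_pre by (simp add: iota_vec_def)

lemma hp_nonzero: "k \<in> Kidx \<Longrightarrow> \<not> vequivS n I s (hp k) (\<lambda>j. 0)"
  using basis_minimal[of "hp k"] spanSd_vequivS[OF spanSd_zero] by blast

lemma h_nonzero:
  assumes k: "k \<in> Kidx"
  shows "\<not> vequivA I s (h k) (\<lambda>j. 0)"
proof
  assume "vequivA I s (h k) (\<lambda>j. 0)"
  then have "vequivS n I s (iota_vec \<Delta> (h k)) (iota_vec \<Delta> (\<lambda>j. 0))" by (rule iota_vec_vequivA)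
  then have "vequivS n I s (iota_vec \<Delta> (h k)) (\<lambda>j. 0)" by (simp only: iota_vec_zero)
  then show False using hp_nonzero[OF k] vequivS_trans[OF hp_vequivS_iota_vec[OF k]] by blast
qed

lemma syzA_h:
  assumes k: "k \<in> Kidx"
  shows "syzA n I r s g (h k)"
proof -
  obtain w where w: "vequivS n I s (hp k) w"
      "\<forall>i\<in>{1..r}. (\<Sum>j=1..s. iota_sh 0 (g j i) * w j) \<in> LPideal n I"
    using basis_syzSd[of "hp k"] k unfolding syzSd_def by blast
  have hw: "vequivS n I s (iota_vec \<Delta> (h k)) w"
    using vequivS_trans[OF vequivS_sym[OF hp_vequivS_iota_vec[OF k]] w(1)] .
  have "(\<Sum>j=1..s. iota_sh 0 (g j i) * iota_vec \<Delta> (h k) j) \<in> LPideal n I" if i: "i \<in> {1..r}" for i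
  proof -
    have "(\<Sum>j=1..s. iota_sh 0 (g j i) * (iota_vec \<Delta> (h k) j - w j)) \<in> LPideal n I"
      by (rule LPideal_sum, rule LPideal_lmult)
        (use hw g_car i in \<open>auto simp: vequivS_def intro: Pcar_iota_sh\<close>)
    then have "(\<Sum>j=1..s. iota_sh 0 (g j i) * iota_vec \<Delta> (h k) j) - (\<Sum>j=1..s. iota_sh 0 (g j i) * w j)
        \<in> LPideal n I"
      by (simp add: sum_subtractf right_diff_distrib)
    from LPideal_add[OF this w(2)[rule_format, OF i]] show ?thesis by simp
  qed
  then show ?thesis
    using syzA_iff_letterplace[of "h k"] h_car k by (simp add: syzA_def fmul_eq_times)
qed

lemma h_homogeneous:
  assumes k: "k \<in> Kidx"
  shows "\<exists>e\<le>d. homA I s \<Delta> e (h k)"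
proof -
  have to_h: "vequivS n I s (hp k) w \<Longrightarrow> vequivS n I s (iota_vec \<Delta> (h k)) w" for w
    using vequivS_trans[OF vequivS_sym[OF hp_vequivS_iota_vec[OF k]]] .
  obtain e where "homS n I s \<Delta> e (hp k)" using basis_homS k by blast
  then have "homS n I s \<Delta> e (iota_vec \<Delta> (h k))" using to_h unfolding homS_def by blast
  then have hom: "homA I s \<Delta> e (h k)" by (rule homA_if_homS_iota_vec)
  have "e \<le> d"
  proof (rule ccontr)
    assume "\<not> e \<le> d"
    obtain w where "vequivS n I s (hp k) w" "\<forall>j\<in>{1..s}. w j \<in> Pdcar n d"
      using basis_syzSd[of "hp k"] k unfolding syzSd_def by blast
    then have "vequivA I s (vcomp \<Delta> e (h k)) (\<lambda>j. 0)"
      using \<open>\<not> e \<le> d\<close> g_deg to_h by (intro vcomp_zero_if_Pdcar) auto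
    then have "vequivA I s (h k) (\<lambda>j. 0)" using vequivA_trans[OF vequivA_vcomp[OF hom]] by blast
    with h_nonzero k show False by blast
  qed
  with hom show ?thesis by blast
qed

definition hdeg :: "'i \<Rightarrow> nat" where
  "hdeg k = (SOME e. e \<le> d \<and> homA I s \<Delta> e (h k))"

lemma hdeg: assumes "k \<in> Kidx" shows "hdeg k \<le> d" "homA I s \<Delta> (hdeg k) (h k)"
  using someI_ex[OF h_homogeneous[OF assms]] unfolding hdeg_def by auto

definition hcomp :: "'i \<Rightarrow> nat \<Rightarrow> 'k fpoly" where
  "hcomp k = vcomp \<Delta> (hdeg k) (h k)"

lemma h_vequivA_hcomp: "k \<in> Kidx \<Longrightarrow> vequivA I s (h k) (hcomp k)"
  unfolding hcomp_def by (rule vequivA_vcomp[OF hdeg(2)])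

lemma vhom_hcomp: "vhom \<Delta> (hdeg k) (hcomp k)"
  unfolding hcomp_def by (rule vhom_vcomp)

lemma hp_vequivS_iota_vec_hcomp: "k \<in> Kidx \<Longrightarrow> vequivS n I s (hp k) (iota_vec \<Delta> (hcomp k))"
  using vequivS_trans[OF hp_vequivS_iota_vec iota_vec_vequivA[OF h_vequivA_hcomp]] by blast

lemma h_component_ideal:
  assumes "k \<in> Kidx" "j \<in> {1..s}" "hdeg k < \<Delta> j"
  shows "h k j \<in> I"
proof -
  have "h k j - hcomp k j \<in> I" using h_vequivA_hcomp[OF assms(1)] assms(2) by (simp add: vequivA_def)
  then show ?thesis using assms(3) by (simp add: hcomp_def vcomp_def)
qed

lemma h_vequivA_if_hp_vequivS:
  assumes "k \<in> Kidx" "k' \<in> Kidx" "vequivS n I s (hp k') (hp k)"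
  shows "vequivA I s (h k') (h k)"
proof (rule vequivA_if_iota_vec_vequivS)
  show "vequivS n I s (iota_vec \<Delta> (h k')) (iota_vec \<Delta> (h k))"
    using vequivS_trans[OF vequivS_sym[OF hp_vequivS_iota_vec[OF assms(2)]]
        vequivS_trans[OF assms(3) hp_vequivS_iota_vec[OF assms(1)]]] .
qed

lemma phi_hp_times:
  assumes k: "k \<in> Kidx" and a: "a \<in> Pcar n" and j: "j \<in> {1..s}" and "\<Delta> j \<le> e"
  shows "phi (\<Delta> j) (e - \<Delta> j) (hp k j * a)
    - h k j * (if hdeg k \<le> e then phi (hdeg k) (e - hdeg k) a else 0) \<in> I"
proof -
  let ?b = "if hdeg k \<le> e then phi (hdeg k) (e - hdeg k) a else 0"
  have b: "?b \<in> Fcar n" using a by (simp add: Fcar_phi)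
  have d1: "phi (\<Delta> j) (e - \<Delta> j) ((hp k j - iota_vec \<Delta> (hcomp k) j) * a) \<in> I"
    by (rule phi_LPideal, rule LPideal_rmult[OF a])
      (use hp_vequivS_iota_vec_hcomp[OF k] j in \<open>simp add: vequivS_def\<close>)
  have d2: "phi (\<Delta> j) (e - \<Delta> j) (iota_vec \<Delta> (hcomp k) j * a) = hcomp k j * ?b"
  proof (cases "\<Delta> j \<le> hdeg k")
    case True
    then have "fhom (hdeg k - \<Delta> j) (hcomp k j)" using vhom_hcomp[of k] by (simp add: vhom_def)
    from phi_iota_sh_fhom_times[OF this, of "\<Delta> j" "e - \<Delta> j" a]
    have "phi (\<Delta> j) (e - \<Delta> j) (iota_sh (\<Delta> j) (hcomp k j) * a) =
        (if hdeg k - \<Delta> j \<le> e - \<Delta> j then hcomp k j * phi (\<Delta> j + (hdeg k - \<Delta> j)) (e - \<Delta> j - (hdeg k - \<Delta> j)) a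
         else 0)" .
    moreover have "(hdeg k - \<Delta> j \<le> e - \<Delta> j) = (hdeg k \<le> e)" "\<Delta> j + (hdeg k - \<Delta> j) = hdeg k"
      "e - \<Delta> j - (hdeg k - \<Delta> j) = e - hdeg k"
      using True \<open>\<Delta> j \<le> e\<close> by linarith+
    ultimately show ?thesis by (simp add: iota_vec_def)
  next
    case False
    then show ?thesis by (simp add: hcomp_def vcomp_def iota_vec_def)
  qed
  have "h k j - hcomp k j \<in> I" using h_vequivA_hcomp[OF k] j by (simp add: vequivA_def)
  then have d3: "hcomp k j * ?b - h k j * ?b \<in> I"
    using ideal_rmult[OF b ideal_diff_sym] by (simp add: left_diff_distrib)
  have eq: "phi (\<Delta> j) (e - \<Delta> j) (hp k j * a) - h k j * ?b
      = phi (\<Delta> j) (e - \<Delta> j) ((hp k j - iota_vec \<Delta> (hcomp k) j) * a) + (hcomp k j * ?b - h k j * ?b)"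
    using d2 by (simp add: left_diff_distrib phi_diff)
  show ?thesis by (subst eq) (rule ideal_add[OF d1 d3])
qed

lemma basis_generator_extract:
  assumes b: "b \<in> Bset n s \<Delta> \<union> hp ` Kidx" and a: "a \<in> Pcar n"
  shows "\<exists>c. rspanA n I s (h ` Kidx) c \<and>
    (\<forall>j\<in>{1..s}. (if \<Delta> j \<le> e then phi (\<Delta> j) (e - \<Delta> j) (b j * a) else 0) - c j \<in> I)"
proof (cases "b \<in> hp ` Kidx")
  case True
  then obtain k where k: "k \<in> Kidx" "b = hp k" by blast
  let ?b = "if hdeg k \<le> e then phi (hdeg k) (e - hdeg k) a else 0"
  have b: "?b \<in> Fcar n" using a by (simp add: Fcar_phi)
  have "(if \<Delta> j \<le> e then phi (\<Delta> j) (e - \<Delta> j) (b j * a) else 0) - h k j * ?b \<in> I"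
    if j: "j \<in> {1..s}" for j
  proof (cases "\<Delta> j \<le> e")
    case True
    then show ?thesis using phi_hp_times[OF k(1) a j True] k(2) by simp
  next
    case False
    show ?thesis
    proof (cases "hdeg k \<le> e")
      case True
      with False have "h k j \<in> I" using h_component_ideal[OF k(1) j] by simp
      then have "h k j * ?b \<in> I" using ideal_rmult[OF b] by blast
      then show ?thesis using False ideal_uminus by simp
    qed (use False in simp)
  qed
  moreover have "rspanA n I s (h ` Kidx) (\<lambda>j. h k j * ?b)" using k(1) b by (intro rspanA_gen) auto
  ultimately show ?thesis by blast
next
  case False
  then have "b \<in> Bset n s \<Delta>" using b by blast
  then show ?thesis by (intro exI[of _ "\<lambda>j. 0"]) (simp add: rspanA_zero phi_Bset_times)
qed

lemma syzSd_iota_vec_vcomp: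
  assumes v: "syzA n I r s g v" and "e \<le> d"
  shows "syzSd n I d r s g (iota_vec \<Delta> (vcomp \<Delta> e v))"
proof -
  let ?u = "vcomp \<Delta> e v"
  have "syzA n I r s g ?u" by (rule syzA_vcomp[OF v])
  then have uF: "\<forall>j\<in>{1..s}. ?u j \<in> Fcar n"
      and u_syz: "\<forall>i\<in>{1..r}. (\<Sum>j=1..s. g j i * ?u j) \<in> I"
    by (simp_all add: syzA_def fmul_eq_times)
  have "iota_vec \<Delta> ?u j \<in> Pdcar n d" if j: "j \<in> {1..s}" for j
  proof (cases "\<Delta> j \<le> e")
    case True
    then have "fhom (e - \<Delta> j) (?u j)" by (simp add: vcomp_def fhom_fcomp)
    then show ?thesis using uF j True \<open>e \<le> d\<close> by (auto simp: iota_vec_def intro!: Pdcar_iota_sh)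
  next
    case False
    then show ?thesis by (simp add: iota_vec_def vcomp_def)
  qed
  then show ?thesis
    unfolding syzSd_def using syzA_iff_letterplace[OF uF] u_syz vequivS_refl by blast
qed

lemma low_syz_in_span_h:
  assumes v: "syzA n I r s g v" "homA I s \<Delta> e v" and "e \<le> d"
  shows "rspanA n I s (h ` Kidx) v"
proof -
  let ?u = "vcomp \<Delta> e v"
  obtain gs as where a: "length as = length gs" "set gs \<subseteq> Bset n s \<Delta> \<union> hp ` Kidx"
      "set as \<subseteq> Pdcar n d" "vequivS n I s (iota_vec \<Delta> ?u) (\<lambda>i. \<Sum>t<length gs. (gs ! t) i * as ! t)"
    using basis_spans[OF syzSd_iota_vec_vcomp[OF v(1) \<open>e \<le> d\<close>]] unfolding spanSd_def by blast
  define ext where "ext t j = (if \<Delta> j \<le> e then phi (\<Delta> j) (e - \<Delta> j) ((gs ! t) j * as ! t) else 0)" for t j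
  have "\<forall>t\<in>{..<length gs}. \<exists>c. rspanA n I s (h ` Kidx) c \<and> (\<forall>j\<in>{1..s}. ext t j - c j \<in> I)"
  proof
    fix t assume "t \<in> {..<length gs}"
    then have "gs ! t \<in> set gs" "as ! t \<in> set as" using a(1) by simp_all
    then have "gs ! t \<in> Bset n s \<Delta> \<union> hp ` Kidx" "as ! t \<in> Pcar n"
      using a(2,3) by (blast intro: Pdcar_Pcar)+
    from basis_generator_extract[OF this]
    show "\<exists>c. rspanA n I s (h ` Kidx) c \<and> (\<forall>j\<in>{1..s}. ext t j - c j \<in> I)"
      unfolding ext_def .
  qed
  from bchoice[OF this] obtain c
    where c: "\<forall>t\<in>{..<length gs}. rspanA n I s (h ` Kidx) (c t) \<and> (\<forall>j\<in>{1..s}. ext t j - c t j \<in> I)" ..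
  have "vequivA I s ?u (\<lambda>j. \<Sum>t<length gs. ext t j)"
    unfolding vequivA_def
  proof
    fix j assume j: "j \<in> {1..s}"
    show "?u j - (\<Sum>t<length gs. ext t j) \<in> I"
    proof (cases "\<Delta> j \<le> e")
      case True
      have "phi (\<Delta> j) (e - \<Delta> j) (iota_vec \<Delta> ?u j - (\<Sum>t<length gs. (gs ! t) j * as ! t)) \<in> I"
        using a(4) j by (intro phi_LPideal) (simp add: vequivS_def)
      then show ?thesis
        using True by (simp add: ext_def phi_diff phi_sum iota_vec_def phi_iota_sh vcomp_def fcomp_fcomp)
    qed (simp add: ext_def vcomp_def)
  qed
  moreover have "vequivA I s (\<lambda>j. \<Sum>t<length gs. ext t j) (\<lambda>j. \<Sum>t<length gs. c t j)"
    by (rule vequivA_sum) (use c in \<open>simp add: vequivA_def\<close>)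
  ultimately have "vequivA I s v (\<lambda>j. \<Sum>t<length gs. c t j)"
    using vequivA_trans[OF vequivA_vcomp[OF v(2)]] vequivA_trans by blast
  moreover have "rspanA n I s (h ` Kidx) (\<lambda>j. \<Sum>t<length gs. c t j)"
    by (rule rspanA_sum) (use c in blast)
  ultimately show ?thesis using rspanA_vequivA by blast
qed

lemma spanSd_iota_vec_h_times:
  assumes k: "k \<in> Kidx" and k': "k' \<in> Kidx" "\<not> vequivA I s (h k') (h k)"
    and a: "a \<in> Fcar n" "fhom l a" and "hdeg k' + l \<le> d"
  shows "spanSd n I d s {w \<in> Bset n s \<Delta> \<union> hp ` Kidx. \<not> vequivS n I s w (hp k)}
    (iota_vec \<Delta> (\<lambda>j. h k' j * a))"
proof -
  have aP: "iota_sh (hdeg k') a \<in> Pdcar n d" using Pdcar_iota_sh[OF a] assms(6) .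
  have "vequivS n I s (iota_vec \<Delta> (\<lambda>j. h k' j * a)) (iota_vec \<Delta> (\<lambda>j. hcomp k' j * a))"
    by (rule iota_vec_vequivA, rule vequivA_rmult[OF h_vequivA_hcomp[OF k'(1)] a(1)])
  also have "iota_vec \<Delta> (\<lambda>j. hcomp k' j * a) = (\<lambda>j. iota_vec \<Delta> (hcomp k') j * iota_sh (hdeg k') a)"
    using iota_vec_vhom_times[OF vhom_hcomp] by (simp add: fun_eq_iff)
  finally have lift: "vequivS n I s (iota_vec \<Delta> (\<lambda>j. h k' j * a)) (\<lambda>j. hp k' j * iota_sh (hdeg k') a)"
    using vequivS_trans[OF _ vequivS_rmult[OF vequivS_sym[OF hp_vequivS_iota_vec_hcomp[OF k'(1)]] Pdcar_Pcar[OF aP]]]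
    by blast
  have "hp k' \<in> {w \<in> Bset n s \<Delta> \<union> hp ` Kidx. \<not> vequivS n I s w (hp k)}"
    using k' h_vequivA_if_hp_vequivS[OF k k'(1)] by auto
  from spanSd_gen[OF this aP] show ?thesis by (rule spanSd_vequivS[OF _ lift])
qed

lemma h_not_in_span_others:
  assumes k: "k \<in> Kidx"
  shows "\<not> rspanA n I s {w \<in> h ` Kidx. \<not> vequivA I s w (h k)} (h k)"
proof
  let ?G = "{w \<in> h ` Kidx. \<not> vequivA I s w (h k)}"
  let ?G' = "{w \<in> Bset n s \<Delta> \<union> hp ` Kidx. \<not> vequivS n I s w (hp k)}"
  let ?idx = "inv_into Kidx h"
  have idx: "?idx u \<in> Kidx" "h (?idx u) = u" if "u \<in> ?G" for u
    using that by (auto intro: inv_into_into f_inv_into_f)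
  have deg: "homA I s \<Delta> (hdeg (?idx u)) u" if "u \<in> ?G" for u
    using hdeg(2)[OF idx(1)[OF that]] idx(2)[OF that] by simp
  assume "rspanA n I s ?G (h k)"
  from rspanA_vcomp_homogeneous[OF this deg, of "hdeg k"]
  obtain gs as where a: "length as = length gs" "set gs \<subseteq> ?G" "set as \<subseteq> Fcar n"
      "\<forall>t<length gs. as ! t = 0 \<or> (hdeg (?idx (gs ! t)) \<le> hdeg k \<and> fhom (hdeg k - hdeg (?idx (gs ! t))) (as ! t))"
      "vequivA I s (vcomp \<Delta> (hdeg k) (h k)) (\<lambda>j. \<Sum>t<length gs. (gs ! t) j * as ! t)"
    by blast
  have "vequivA I s (h k) (\<lambda>j. \<Sum>t<length gs. (gs ! t) j * as ! t)"
    using vequivA_trans[OF vequivA_vcomp[OF hdeg(2)[OF k]] a(5)] .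
  then have "vequivS n I s (hp k) (iota_vec \<Delta> (\<lambda>j. \<Sum>t<length gs. (gs ! t) j * as ! t))"
    by (rule vequivS_trans[OF hp_vequivS_iota_vec[OF k] iota_vec_vequivA])
  then have "vequivS n I s (hp k) (\<lambda>j. \<Sum>t\<in>{..<length gs}. iota_vec \<Delta> (\<lambda>j. (gs ! t) j * as ! t) j)"
    by (simp add: iota_vec_def iota_sh_sum)
  moreover have "spanSd n I d s ?G' (\<lambda>j. \<Sum>t\<in>{..<length gs}. iota_vec \<Delta> (\<lambda>j. (gs ! t) j * as ! t) j)"
  proof (rule spanSd_sum)
    fix t assume "t \<in> {..<length gs}"
    then have t: "t < length gs" by simp
    then have gt: "gs ! t \<in> ?G" "as ! t \<in> Fcar n" using a(1-3) nth_mem by fastforce+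
    show "spanSd n I d s ?G' (iota_vec \<Delta> (\<lambda>j. (gs ! t) j * as ! t))"
    proof (cases "as ! t = 0")
      case True
      then show ?thesis by (simp add: iota_vec_def spanSd_zero)
    next
      case False
      let ?k' = "?idx (gs ! t)"
      have k': "?k' \<in> Kidx" "h ?k' = gs ! t" using idx[OF gt(1)] by auto
      have fh: "fhom (hdeg k - hdeg ?k') (as ! t)" and "hdeg ?k' \<le> hdeg k" using a(4) t False by auto
      then have "hdeg ?k' + (hdeg k - hdeg ?k') \<le> d" using hdeg(1)[OF k] by simp
      moreover have "\<not> vequivA I s (h ?k') (h k)" using gt(1) k'(2) by simp
      ultimately have "spanSd n I d s ?G' (iota_vec \<Delta> (\<lambda>j. h ?k' j * as ! t))"
        using spanSd_iota_vec_h_times[OF k k'(1) _ gt(2) fh] by blast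
      then show ?thesis using k'(2) by simp
    qed
  qed
  ultimately have "spanSd n I d s ?G' (hp k)" using spanSd_vequivS by blast
  then show False using basis_minimal k by blast
qed

end

theorem mainTheorem13:
  fixes n r s d :: nat
    and I :: "'k::field fpoly set"
    and g :: "nat \<Rightarrow> nat \<Rightarrow> 'k fpoly"
    and \<Delta> :: "nat \<Rightarrow> nat"
    and Kidx :: "'i set"
    and hp :: "'i \<Rightarrow> nat \<Rightarrow> 'k cpoly"
    and h :: "'i \<Rightarrow> nat \<Rightarrow> 'k fpoly"
  assumes I: "graded_ideal n I"
    and g_car: "\<forall>j\<in>{1..s}. \<forall>i\<in>{1..r}. g j i \<in> Fcar n"
    and g_hom: "\<forall>j\<in>{1..s}. \<exists>w. vequivA I r (g j) w \<and> (\<forall>i\<in>{1..r}. fhom (\<Delta> j) (w i))"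
    and g_deg: "\<forall>j\<in>{1..s}. \<Delta> j \<le> d"
    and g_min: "\<forall>j\<in>{1..s}. \<not> rspanA n I r (g ` ({1..s} - {j})) (g j)"
    and basis: "minbasis_syzSd n I d r s \<Delta> g (Bset n s \<Delta> \<union> hp ` Kidx)"
    and h_car: "\<forall>k\<in>Kidx. \<forall>j\<in>{1..s}. h k j \<in> Fcar n"
    and h_pre: "\<forall>k\<in>Kidx. vequivS n I s (hp k) (\<lambda>j. iota_sh (\<Delta> j) (h k j))"
  shows "\<exists>H. minbasis_syzA n I r s \<Delta> g H \<and>
           (\<forall>v\<in>H. (\<exists>e\<le>d. homA I s \<Delta> e v) \<longrightarrow> (\<exists>k\<in>Kidx. vequivA I s v (h k))) \<and>
           (\<forall>k\<in>Kidx. \<exists>v\<in>H. (\<exists>e\<le>d. homA I s \<Delta> e v) \<and> vequivA I s v (h k))"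
proof -
  interpret letterplace_minbasis n I r s g \<Delta> d Kidx hp h
    by unfold_locales (rule I g_hom g_car g_deg basis h_car h_pre)+
  interpret low_degree_basis n I r s g \<Delta> d "h ` Kidx"
    by unfold_locales (auto intro: syzA_h h_homogeneous low_syz_in_span_h dest: h_not_in_span_others)
  have "\<exists>k\<in>Kidx. vequivA I s v (h k)" if "v \<in> extended_basis" "homA I s \<Delta> e v" "e \<le> d" for v e
    using extended_basis_low_degree[OF that] vequivA_refl by blast
  moreover have "h k \<in> extended_basis" if "k \<in> Kidx" for k
    using that by (simp add: extended_basis_def)
  ultimately show ?thesis
    using minbasis_syzA_extended_basis h_homogeneous vequivA_refl by blast
qed

end
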